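(* Let $n\ge1$ and $\pi\in\mathfrak B_n$ (with either sign of $\pi_1$). Then \[\sum_{T_\sigma\in\mathrm{Orb}^*(T_\pi)}x^{\mathrm{run}_B(\sigma)}=x^{\mathrm{leaf}(T_\pi)}(1+x)^{\,n-\mathrm{leaf}(T_\pi)}.\]
   Context: $\mathfrak B_n$ is the set of signed permutations $\pi=\pi_1\cdots\pi_n$ (words over $\{\pm1,\dots,\pm n\}$ with $|\pi_1|,\dots,|\pi_n|$ a permutation of $[n]$), compared as integers; set $\pi_0=0$. $\mathrm{run}_B(\pi)$ is $1$ plus the number of $i\in\{1,\dots,n-1\}$ with $\pi_{i-1}<\pi_i>\pi_{i+1}$ or $\pi_{i-1}>\pi_i<\pi_{i+1}$. Trees are rooted binary trees with each child designated left or right. A min–max tree is labeled bijectively by a totally ordered set so that each node's label is the minimum or maximum of its subtree's labels. A node with a child is inner; an inner node is a min-node (resp. max-node) if its label is the minimum (resp. maximum) of its subtree. An HR-tree is a min–max tree in which every inner node $s$ has a nonempty right subtree containing the maximum label of the subtree of $s$ if $s$ is a min-node, the minimum if $s$ is a max-node. The reading word is the in-order reading $w(T)=w(L)\,\ell_{\mathrm{root}}\,w(R)$. $\mathcal{BHR}_n$ is the set of HR-trees with label set $\{0,s_1,\dots,s_n\}$, $s_i\in\{i,-i\}$, with $0$ the first letter of $w(T)$; $T\mapsto w(T)=0\pi_1\cdots\pi_n$ is a bijection $\mathcal{BHR}_n\to\mathfrak B_n$ and $T_\pi$ is the tree with $w(T_\pi)=0\pi$. $\mathrm{leaf}(T)$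 is the number of leaves of $T$ (the node $0$ included if it is a leaf). Modified HR-action: for $i\in[n]$ and $T_\pi\in\mathcal{BHR}_n$, let $v$ be the node labeled $\pi_i$. If $v$ is a leaf, or if the node labeled $0$ is a leaf whose parent is $v$, then $\widehat\psi_i(T_\pi)=T_\pi$. Otherwise let $R$ consist of $\pi_i$ and the labels of the right subtree of $v$; relabel $v$ and its right subtree, keeping the shape, so that $v$ receives $\max R$ if $v$ is a min-node and $\min R$ if $v$ is a max-node, the right subtree nodes receiving the remaining elements of $R$ by the order-preserving bijection from their old labels; other labels unchanged. The $\widehat\psi_i$ are commuting involutions and $\mathrm{Orb}^*(T)$ is the set of trees obtained from $T$ by compositions of the $\widehat\psi_i$, $i\in[n]$. *)

theory Defs
  imports "HOL-Library.Tree" "HOL-Computational_Algebra.Polynomial"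
begin

definition signed_perms :: "nat \<Rightarrow> int list set" where
  "signed_perms n = {p. length p = n \<and> distinct (map (\<lambda>x. nat \<bar>x\<bar>) p)
                        \<and> set (map (\<lambda>x. nat \<bar>x\<bar>) p) = {1..n}}"

definition runB :: "int list \<Rightarrow> nat" where
  "runB p = (let w = 0 # p; n = length p in
     1 + card {i. 1 \<le> i \<and> i \<le> n - 1 \<and>
        ((w!(i-1) < w!i \<and> w!i > w!(i+1)) \<or> (w!(i-1) > w!i \<and> w!i < w!(i+1)))})"

text \<open>Trees: rooted binary trees with left/right children; Leaf is the empty tree,
  a node Node l a r is a leaf iff l and r are both empty.\<close>
definition is_leaf_node :: "'a tree \<Rightarrow> bool" where
  "is_leaf_node t = (\<exists>a. t = Node Leaf a Leaf)"

fun leaf_count :: "'a tree \<Rightarrow> nat" where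
  "leaf_count Leaf = 0"
| "leaf_count (Node l a r) =
     (if l = Leaf \<and> r = Leaf then 1 else leaf_count l + leaf_count r)"

fun hr_cond :: "int tree \<Rightarrow> bool" where
  "hr_cond Leaf = True"
| "hr_cond (Node l a r) =
     (let S = set_tree (Node l a r) in
       hr_cond l \<and> hr_cond r \<and> (a = Min S \<or> a = Max S) \<and>
       (\<not> (l = Leaf \<and> r = Leaf) \<longrightarrow>
          r \<noteq> Leaf \<and> (a = Min S \<longrightarrow> Max S \<in> set_tree r)
                 \<and> (a = Max S \<longrightarrow> Min S \<in> set_tree r)))"

definition is_HR :: "int tree \<Rightarrow> bool" where
  "is_HR t = (distinct (inorder t) \<and> hr_cond t)"

definition BHR :: "nat \<Rightarrow> int tree set" where
  "BHR n = {t. is_HR t \<and> (\<exists>p\<in>signed_perms n. inorder t = 0 # p)}"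

definition T_of :: "int list \<Rightarrow> int tree" where
  "T_of p = (THE t. is_HR t \<and> inorder t = 0 # p)"

text \<open>Order-preserving bijection from finite A onto finite B (same size).\<close>
definition op_bij :: "int set \<Rightarrow> int set \<Rightarrow> int \<Rightarrow> int" where
  "op_bij A B x = sorted_list_of_set B ! card {y\<in>A. y < x}"

fun relabel_node :: "int tree \<Rightarrow> int tree" where
  "relabel_node Leaf = Leaf"
| "relabel_node (Node l a r) =
     (if l = Leaf \<and> r = Leaf then Node l a r
      else if l = Node Leaf 0 Leaf \<or> r = Node Leaf 0 Leaf then Node l a r
      else (let S = set_tree (Node l a r); R = insert a (set_tree r) in
        if a = Min S then
          Node l (Max R) (map_tree (op_bij (set_tree r) (R - {Max R})) r)
        else if a = Max S then
          Node l (Min R) (map_tree (op_bij (set_tree r) (R - {Min R})) r)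
        else Node l a r))"

fun psi_at :: "int \<Rightarrow> int tree \<Rightarrow> int tree" where
  "psi_at c Leaf = Leaf"
| "psi_at c (Node l a r) =
     (if a = c then relabel_node (Node l a r) else Node (psi_at c l) a (psi_at c r))"

text \<open>psi_i(T): act at the node labelled pi_i, where 0 pi_1 ... pi_n is the reading word.\<close>
definition psi :: "nat \<Rightarrow> int tree \<Rightarrow> int tree" where
  "psi i t = psi_at (inorder t ! i) t"

inductive_set Orb :: "nat \<Rightarrow> int tree \<Rightarrow> int tree set" for n t where
  refl: "t \<in> Orb n t"
| step: "s \<in> Orb n t \<Longrightarrow> i \<in> {1..n} \<Longrightarrow> psi i s \<in> Orb n t"

end

(*
  The action flips the label of an inner node between the minimum and the maximum of its
  subtree, relabelling the right subtree order-preservingly. Flips keep the shape and the label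
  set of every subtree, so the orbit is a product: the subtrees of the root vary independently,
  and an active root may in addition be flipped. Being a peak or a valley is a local property of
  a node of an HR-tree: a node with two subtrees always is one, as both its neighbours in the
  reading word lie in its subtree on the same side of it; for the other nodes it only depends on
  the side on which the neighbours outside the subtree lie, i.e. on whether the enclosing nodes
  are min- or max-nodes. A flip switches exactly this information, so summing x^run over the
  orbit by induction on the tree yields one factor x per leaf and one factor 1 + x per node
  moved by the action.
*)
theory Submission
  imports Defs
begin

section \<open>Order-preserving bijections\<close>

lemma strict_mono_on_Min:
  fixes f :: "'a::linorder \<Rightarrow> 'b::linorder"
  assumes "strict_mono_on S f" "finite S" "S \<noteq> {}"
  shows "Min (f ` S) = f (Min S)"
proof (rule Min_eqI)
  fix y assume "y \<in> f ` S"
  then obtain x where "x \<in> S" "y = f x" by blast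
  then show "f (Min S) \<le> y"
    using strict_mono_on_leD[OF assms(1) Min_in[OF assms(2,3)]] assms(2) by simp
qed (use assms in auto)

lemma strict_mono_on_Max:
  fixes f :: "'a::linorder \<Rightarrow> 'b::linorder"
  assumes "strict_mono_on S f" "finite S" "S \<noteq> {}"
  shows "Max (f ` S) = f (Max S)"
proof (rule Max_eqI)
  fix y assume "y \<in> f ` S"
  then obtain x where "x \<in> S" "y = f x" by blast
  then show "y \<le> f (Max S)"
    using strict_mono_on_leD[OF assms(1) _ Max_in[OF assms(2,3)]] assms(2) by simp
qed (use assms in auto)

lemma sorted_list_of_set_nth_card_less:
  fixes A :: "'a::linorder set"
  assumes "finite A" "x \<in> A"
  shows "sorted_list_of_set A ! card {y\<in>A. y < x} = x"
proof -
  let ?xs = "sorted_list_of_set A"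
  have sorted: "sorted_wrt (<) ?xs" and "distinct ?xs" and set_xs: "set ?xs = A"
    using assms by auto
  obtain j where j: "j < length ?xs" "?xs ! j = x"
    using assms(2) set_xs in_set_conv_nth by metis
  have "{y\<in>A. y < x} = set (take j ?xs)"
  proof (intro set_eqI iffI)
    fix y assume y: "y \<in> {y\<in>A. y < x}"
    then have "y \<in> set ?xs" using set_xs by simp
    then obtain i where i: "i < length ?xs" "?xs ! i = y"
      by (auto simp: in_set_conv_nth)
    have "i < j"
    proof (rule ccontr)
      assume "\<not> i < j"
      then have "x \<le> y"
        using sorted_wrt_nth_less[OF sorted, of j i] i j by (cases "j = i") auto
      then show False using y leD by blast
    qed
    then have "take j ?xs ! i \<in> set (take j ?xs)"
      using i by (intro nth_mem) simp
    then show "y \<in> set (take j ?xs)"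
      using i \<open>i < j\<close> by simp
  next
    fix y assume "y \<in> set (take j ?xs)"
    then obtain i where "i < length (take j ?xs)" "take j ?xs ! i = y"
      unfolding in_set_conv_nth by blast
    then have "i < j" "?xs ! i = y"
      by simp_all
    moreover have "?xs ! i \<in> A"
      using \<open>i < j\<close> j set_xs nth_mem[of i ?xs] by simp
    ultimately show "y \<in> {y\<in>A. y < x}"
      using sorted_wrt_nth_less[OF sorted \<open>i < j\<close> j(1)] j by simp
  qed
  then have "card {y\<in>A. y < x} = j"
    using \<open>distinct ?xs\<close> j by (simp add: distinct_card)
  then show ?thesis using j by simp
qed

lemma card_less_image_strict_mono:
  fixes f :: "'a::linorder \<Rightarrow> 'b::linorder"
  assumes "strict_mono_on A f" "x \<in> A"
  shows "card {y\<in>f ` A. y < f x} = card {y\<in>A. y < x}"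
proof -
  have "{y\<in>f ` A. y < f x} = f ` {y\<in>A. y < x}"
    using strict_mono_on_less[OF assms(1) _ assms(2)] by blast
  moreover have "inj_on f {y\<in>A. y < x}"
    using strict_mono_on_imp_inj_on[OF assms(1)] by (rule inj_on_subset) auto
  ultimately show ?thesis by (simp add: card_image)
qed

lemma op_bij_strict_mono_eq:
  assumes "finite A" "strict_mono_on A f" "f ` A = B" "x \<in> A"
  shows "op_bij A B x = f x"
proof -
  have "card {y\<in>A. y < x} = card {y\<in>B. y < f x}"
    using card_less_image_strict_mono[OF assms(2,4)] assms(3) by simp
  moreover have "finite B" "f x \<in> B"
    using assms by auto
  ultimately show ?thesis
    unfolding op_bij_def by (simp add: sorted_list_of_set_nth_card_less)
qed

lemma op_bij_self:
  assumes "finite A" "x \<in> A"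
  shows "op_bij A A x = x"
  using op_bij_strict_mono_eq[of A id A x] assms by (simp add: strict_mono_on_def)

lemma op_bij_image_strict_mono:
  assumes "strict_mono_on A g" "x \<in> A"
  shows "op_bij (g ` A) C (g x) = op_bij A C x"
  unfolding op_bij_def using card_less_image_strict_mono[OF assms] by simp

lemma
  assumes "finite A" "finite B" "card A = card B"
  shows strict_mono_on_op_bij: "strict_mono_on A (op_bij A B)"
    and op_bij_image: "op_bij A B ` A = B"
proof -
  let ?xs = "sorted_list_of_set B"
  have index_less: "card {y\<in>A. y < x} < length ?xs" if "x \<in> A" for x
  proof -
    have "card {y\<in>A. y < x} < card A"
      using assms(1) that by (intro psubset_card_mono) auto
    then show ?thesis using assms by simp
  qed
  show mono: "strict_mono_on A (op_bij A B)"
  proof (rule strict_mono_onI)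
    fix x y assume "x \<in> A" "y \<in> A" "x < y"
    then have "card {z\<in>A. z < x} < card {z\<in>A. z < y}"
      using assms(1) by (intro psubset_card_mono) auto
    then show "op_bij A B x < op_bij A B y"
      unfolding op_bij_def
      using sorted_wrt_nth_less[OF strict_sorted_list_of_set] index_less[OF \<open>y \<in> A\<close>]
      by blast
  qed
  have "op_bij A B ` A \<subseteq> B"
  proof
    fix y assume "y \<in> op_bij A B ` A"
    then have "y \<in> set ?xs"
      unfolding op_bij_def using index_less by auto
    then show "y \<in> B" using assms(2) by simp
  qed
  moreover have "card (op_bij A B ` A) = card B"
    using card_image[OF strict_mono_on_imp_inj_on[OF mono]] assms(3) by simp
  ultimately show "op_bij A B ` A = B"
    using assms(2) card_subset_eq by blast
qed

lemma op_bij_conj: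
  assumes "finite A" "finite B" "card A = card B" "strict_mono_on (A \<union> B) g" "x \<in> A"
  shows "op_bij (g ` A) (g ` B) (g x) = g (op_bij A B x)"
proof -
  have gA: "strict_mono_on A g" and gB: "strict_mono_on B g"
    using assms(4) by (auto simp: strict_mono_on_def)
  have "strict_mono_on A (g \<circ> op_bij A B)"
  proof (rule strict_mono_onI)
    fix x y assume "x \<in> A" "y \<in> A" "x < y"
    then show "(g \<circ> op_bij A B) x < (g \<circ> op_bij A B) y"
      using strict_mono_onD[OF strict_mono_on_op_bij[OF assms(1-3)]] op_bij_image[OF assms(1-3)]
        strict_mono_onD[OF gB] by (metis comp_apply image_eqI)
  qed
  moreover have "(g \<circ> op_bij A B) ` A = g ` B"
    unfolding image_comp[symmetric] op_bij_image[OF assms(1-3)] ..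
  ultimately show ?thesis
    using op_bij_image_strict_mono[OF gA assms(5)] op_bij_strict_mono_eq[OF assms(1) _ _ assms(5)]
    by simp
qed

section \<open>HR-trees\<close>

lemma hr_cond_Node_iff:
  assumes "set_tree (Node l a r) = S"
  shows "hr_cond (Node l a r) \<longleftrightarrow> hr_cond l \<and> hr_cond r \<and> (a = Min S \<or> a = Max S)
    \<and> (l \<noteq> Leaf \<longrightarrow> r \<noteq> Leaf)
    \<and> (r \<noteq> Leaf \<longrightarrow> (a = Min S \<longrightarrow> Max S \<in> set_tree r) \<and> (a = Max S \<longrightarrow> Min S \<in> set_tree r))"
  unfolding hr_cond.simps Let_def assms by blast

declare hr_cond.simps(2) [simp del]

lemma hr_cond_NodeD:
  assumes "hr_cond (Node l a r)" "set_tree (Node l a r) = S"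
  shows "hr_cond l" "hr_cond r" "a = Min S \<or> a = Max S" "l \<noteq> Leaf \<Longrightarrow> r \<noteq> Leaf"
    "r \<noteq> Leaf \<Longrightarrow> a = Min S \<Longrightarrow> Max S \<in> set_tree r"
    "r \<noteq> Leaf \<Longrightarrow> a = Max S \<Longrightarrow> Min S \<in> set_tree r"
  using assms(1) unfolding hr_cond_Node_iff[OF assms(2)] by blast+

lemma hr_cond_NodeI:
  assumes "hr_cond l" "hr_cond r" "set_tree (Node l a r) = S" "a = Min S \<or> a = Max S"
    "l \<noteq> Leaf \<Longrightarrow> r \<noteq> Leaf"
    "r \<noteq> Leaf \<Longrightarrow> a = Min S \<Longrightarrow> Max S \<in> set_tree r"
    "r \<noteq> Leaf \<Longrightarrow> a = Max S \<Longrightarrow> Min S \<in> set_tree r"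
  shows "hr_cond (Node l a r)"
  unfolding hr_cond_Node_iff[OF assms(3)] using assms by blast

lemma hr_cond_less_root_iff:
  assumes "hr_cond (Node l a r)" "x \<in> set_tree (Node l a r)" "x \<noteq> a"
  shows "x < a \<longleftrightarrow> a = Max (set_tree (Node l a r))"
proof -
  let ?S = "set_tree (Node l a r)"
  have "Min ?S \<le> x" "x \<le> Max ?S" "Min ?S \<le> a" "a \<le> Max ?S"
    using assms(2) by auto
  then show ?thesis
    using hr_cond_NodeD(3)[OF assms(1) HOL.refl] assms(3) by auto
qed

lemma hr_cond_map_tree:
  assumes "strict_mono_on (set_tree t) g"
  shows "hr_cond (map_tree g t) = hr_cond t"
  using assms
proof (induction t)
  case Leaf
  then show ?case by simp
next
  case (Node l a r)
  let ?S = "set_tree (Node l a r)"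
  have "strict_mono_on (set_tree l) g" "strict_mono_on (set_tree r) g"
    using Node.prems by (auto simp: strict_mono_on_def)
  then have IH: "hr_cond (map_tree g l) = hr_cond l" "hr_cond (map_tree g r) = hr_cond r"
    using Node.IH by blast+
  have inj: "inj_on g ?S"
    using Node.prems by (rule strict_mono_on_imp_inj_on)
  have "finite ?S" "?S \<noteq> {}" by auto
  then have extremes: "Min ?S \<in> ?S" "Max ?S \<in> ?S"
    by (rule Min_in, rule Max_in)
  have extremes_map: "Min (g ` ?S) = g (Min ?S)" "Max (g ` ?S) = g (Max ?S)"
    using strict_mono_on_Min[OF Node.prems] strict_mono_on_Max[OF Node.prems] by auto
  have root_eq: "g a = g (Min ?S) \<longleftrightarrow> a = Min ?S" "g a = g (Max ?S) \<longleftrightarrow> a = Max ?S"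
    using inj_on_eq_iff[OF inj _ extremes(1)] inj_on_eq_iff[OF inj _ extremes(2)] by auto
  have right_mem: "g (Max ?S) \<in> g ` set_tree r \<longleftrightarrow> Max ?S \<in> set_tree r"
    "g (Min ?S) \<in> g ` set_tree r \<longleftrightarrow> Min ?S \<in> set_tree r"
    using inj_on_image_mem_iff[OF inj extremes(2)] inj_on_image_mem_iff[OF inj extremes(1)] by auto
  have "set_tree (Node (map_tree g l) (g a) (map_tree g r)) = g ` ?S"
    by (simp add: tree.set_map image_Un)
  from hr_cond_Node_iff[OF this] show ?case
    unfolding tree.map hr_cond_Node_iff[of l a r ?S, OF HOL.refl]
    by (simp only: IH tree.set_map eq_map_tree_Leaf extremes_map root_eq right_mem)
qed

text \<open>The root of an HR-tree is the first letter of its reading word that is the minimum or the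
  maximum of all labels; this pins down the left subtree as the part of the word before it.\<close>

lemma hr_cond_takeWhile_inorder:
  assumes "hr_cond (Node l a r)" "distinct (inorder (Node l a r))"
    "S = set_tree (Node l a r)"
  shows "takeWhile (\<lambda>x. x \<notin> {Min S, Max S}) (inorder (Node l a r)) = inorder l"
proof -
  have "x \<notin> {Min S, Max S}" if "x \<in> set_tree l" for x
  proof -
    have "l \<noteq> Leaf" using that by auto
    then have "r \<noteq> Leaf" using hr_cond_NodeD(4)[OF assms(1) assms(3)[symmetric]] by blast
    then show ?thesis
      using that hr_cond_NodeD(3,5,6)[OF assms(1) assms(3)[symmetric]] assms(2) by auto
  qed
  moreover have "a \<in> {Min S, Max S}"
    using hr_cond_NodeD(3)[OF assms(1) assms(3)[symmetric]] by auto
  ultimately show ?thesis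
    by (subst inorder.simps, subst takeWhile_append2) (auto simp: hr_cond.simps)
qed

lemma hr_tree_unique:
  assumes "hr_cond t1" "hr_cond t2" "distinct (inorder t1)" "inorder t1 = inorder t2"
  shows "t1 = t2"
  using assms
proof (induction t1 arbitrary: t2)
  case Leaf
  then show ?case by simp
next
  case (Node l1 a1 r1)
  obtain l2 a2 r2 where t2: "t2 = Node l2 a2 r2"
    using Node.prems(4) by (cases t2) auto
  let ?S = "set_tree (Node l1 a1 r1)"
  have hr2: "hr_cond (Node l2 a2 r2)"
    using Node.prems(2) t2 by simp
  have "distinct (inorder (Node l2 a2 r2))"
    using Node.prems(3,4) t2 by metis
  moreover have "?S = set_tree (Node l2 a2 r2)"
    using Node.prems(4) t2 by (metis set_inorder)
  ultimately have "inorder l1 = inorder l2"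
    using hr_cond_takeWhile_inorder[OF Node.prems(1,3) HOL.refl]
      hr_cond_takeWhile_inorder[OF hr2] Node.prems(4) t2 by metis
  moreover have "a1 = a2 \<and> inorder r1 = inorder r2"
    using calculation Node.prems(4) t2 by simp
  moreover have "hr_cond l1" "hr_cond r1" "hr_cond l2" "hr_cond r2"
    using hr_cond_NodeD(1,2)[OF Node.prems(1) HOL.refl] hr_cond_NodeD(1,2)[OF hr2 HOL.refl] by blast+
  ultimately have "l1 = l2" "r1 = r2"
    using Node.IH(1)[of l2] Node.IH(2)[of r2] Node.prems(3) by simp_all
  then show ?case
    using \<open>a1 = a2 \<and> _\<close> t2 by simp
qed

lemma split_at_first_extreme:
  fixes w :: "'a::linorder list"
  assumes "distinct w" "w \<noteq> []"
  defines "S \<equiv> set w"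
  obtains us m vs where "w = us @ m # vs" "m = Min S \<or> m = Max S"
    "\<And>x. x \<in> {Min S, Max S} \<Longrightarrow> x \<noteq> m \<Longrightarrow> x \<in> set vs"
    "Min S = Max S \<Longrightarrow> us = [] \<and> vs = []"
proof -
  let ?E = "{Min S, Max S}"
  define us where "us = takeWhile (\<lambda>x. x \<notin> ?E) w"
  have S: "finite S" "S \<noteq> {}" using assms(2) by (auto simp: S_def)
  then have "Min S \<in> set w" by (simp add: S_def)
  then have ne: "dropWhile (\<lambda>x. x \<notin> ?E) w \<noteq> []"
    by (auto simp: dropWhile_eq_Nil_conv)
  then obtain m vs where split: "dropWhile (\<lambda>x. x \<notin> ?E) w = m # vs"
    by (cases "dropWhile (\<lambda>x. x \<notin> ?E) w") auto
  have "m \<in> ?E" using hd_dropWhile[OF ne] split by simp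
  have w: "w = us @ m # vs"
    unfolding us_def using split by (metis takeWhile_dropWhile_id)
  have us_E: "x \<notin> ?E" if "x \<in> set us" for x
    using that set_takeWhileD unfolding us_def by fastforce
  have other: "x \<in> set vs" if "x \<in> ?E" "x \<noteq> m" for x
  proof -
    have "x \<in> set w" using that Min_in[OF S] Max_in[OF S] by (auto simp: S_def)
    then show ?thesis using that us_E w by auto
  qed
  have single: "us = [] \<and> vs = []" if "Min S = Max S"
  proof -
    have "set w \<subseteq> {m}"
    proof
      fix x assume "x \<in> set w"
      then have "Min S \<le> x" "x \<le> Max S" using S by (auto simp: S_def)
      then show "x \<in> {m}" using \<open>m \<in> ?E\<close> \<open>Min S = Max S\<close> by auto
    qed
    then have "length w \<le> 1"
      using distinct_card[OF assms(1)] card_mono[of "{m}" "set w"] by simp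
    then show ?thesis using w by simp
  qed
  show ?thesis
    using that[OF w _ other single] \<open>m \<in> ?E\<close> by blast
qed

lemma hr_tree_exists:
  assumes "distinct (w :: int list)"
  shows "\<exists>t. hr_cond t \<and> inorder t = w"
  using assms
proof (induction "length w" arbitrary: w rule: less_induct)
  case less
  show ?case
  proof (cases "w = []")
    case False
    define S where "S = set w"
    obtain us m vs where w: "w = us @ m # vs" and m: "m = Min S \<or> m = Max S"
      and other: "\<And>x. x \<in> {Min S, Max S} \<Longrightarrow> x \<noteq> m \<Longrightarrow> x \<in> set vs"
      and single: "Min S = Max S \<Longrightarrow> us = [] \<and> vs = []"
      using split_at_first_extreme[OF less.prems False] unfolding S_def by blast
    obtain tL where tL: "hr_cond tL" "inorder tL = us"
      using less.hyps[of us] less.prems w by auto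
    obtain tR where tR: "hr_cond tR" "inorder tR = vs"
      using less.hyps[of vs] less.prems w by auto
    have set_t: "set_tree (Node tL m tR) = S"
      using tL tR w by (simp add: S_def flip: set_inorder)
    have "hr_cond (Node tL m tR)"
    proof (rule hr_cond_NodeI[OF tL(1) tR(1) set_t m])
      show "tR \<noteq> Leaf" if "tL \<noteq> Leaf"
      proof (cases "Min S = Max S")
        case True
        then show ?thesis using single that tL by auto
      next
        case False
        then have "Min S \<in> set vs \<or> Max S \<in> set vs" using other by blast
        then show ?thesis using tR by auto
      qed
      show "Max S \<in> set_tree tR" if "tR \<noteq> Leaf" "m = Min S"
        using other[of "Max S"] single that tR by (cases "Min S = Max S") auto
      show "Min S \<in> set_tree tR" if "tR \<noteq> Leaf" "m = Max S"
        using other[of "Min S"] single that tR by (cases "Min S = Max S") auto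
    qed
    then show ?thesis using tL tR w by (intro exI[of _ "Node tL m tR"]) simp
  qed (intro exI[of _ Leaf], simp)
qed

lemma
  assumes "distinct (0 # p)"
  shows is_HR_T_of: "is_HR (T_of p)" and inorder_T_of: "inorder (T_of p) = 0 # p"
proof -
  have "\<exists>!t. is_HR t \<and> inorder t = 0 # p"
  proof (rule ex_ex1I)
    obtain t where "hr_cond t" "inorder t = 0 # p"
      using hr_tree_exists[OF assms] by blast
    then show "\<exists>t. is_HR t \<and> inorder t = 0 # p"
      using assms unfolding is_HR_def by (metis (no_types))
  next
    fix t1 t2 assume "is_HR t1 \<and> inorder t1 = 0 # p" "is_HR t2 \<and> inorder t2 = 0 # p"
    then show "t1 = t2" using hr_tree_unique by (auto simp: is_HR_def)
  qed
  then have "is_HR (T_of p) \<and> inorder (T_of p) = 0 # p"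
    unfolding T_of_def by (rule theI')
  then show "is_HR (T_of p)" "inorder (T_of p) = 0 # p" by auto
qed

section \<open>Peaks and valleys\<close>

definition is_turn :: "int \<Rightarrow> int \<Rightarrow> int \<Rightarrow> bool" where
  "is_turn p x q \<longleftrightarrow> (p < x \<and> x > q) \<or> (p > x \<and> x < q)"

definition turn_at :: "int option \<Rightarrow> int \<Rightarrow> int option \<Rightarrow> nat" where
  "turn_at p x q = (case (p, q) of (Some p, Some q) \<Rightarrow> of_bool (is_turn p x q) | _ \<Rightarrow> 0)"

definition first_or :: "int list \<Rightarrow> int option \<Rightarrow> int option" where
  "first_or xs q = (case xs of [] \<Rightarrow> q | y # _ \<Rightarrow> Some y)"

definition last_or :: "int option \<Rightarrow> int list \<Rightarrow> int option" where
  "last_or p xs = (if xs = [] then p else Some (last xs))"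

text \<open>\<open>list_turns p xs q\<close> counts the peaks and valleys among the letters of \<open>xs\<close> inside the
  word \<open>p xs q\<close>, where \<open>None\<close> stands for a missing end letter.\<close>

fun list_turns :: "int option \<Rightarrow> int list \<Rightarrow> int option \<Rightarrow> nat" where
  "list_turns p [] q = 0"
| "list_turns p (x # xs) q = turn_at p x (first_or xs q) + list_turns (Some x) xs q"

lemma list_turns_append:
  "list_turns p (u @ v) q = list_turns p u (first_or v q) + list_turns (last_or p u) v q"
proof (induction u arbitrary: p)
  case Nil
  then show ?case by (simp add: last_or_def)
next
  case (Cons x u)
  have "first_or (u @ v) q = first_or u (first_or v q)"
    by (cases u) (auto simp: first_or_def)
  moreover have "last_or p (x # u) = last_or (Some x) u"
    by (simp add: last_or_def)
  ultimately show ?case using Cons.IH by simp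
qed

lemma list_turns_Some_eq_sum:
  "list_turns (Some c) xs None =
     (\<Sum>i = 1..length xs - 1. of_bool (is_turn ((c # xs) ! (i - 1)) ((c # xs) ! i) ((c # xs) ! (i + 1))))"
proof (induction xs arbitrary: c)
  case Nil
  then show ?case by simp
next
  case (Cons x xs)
  show ?case
  proof (cases xs)
    case Nil
    then show ?thesis by (simp add: turn_at_def first_or_def)
  next
    case (Cons y ys)
    let ?g = "\<lambda>i. of_bool (is_turn ((c # x # xs) ! (i - 1)) ((c # x # xs) ! i) ((c # x # xs) ! (i + 1))) :: nat"
    have "(\<Sum>i = 1..length (x # xs) - 1. ?g i) = ?g 1 + (\<Sum>i = 1..length xs - 1. ?g (Suc i))"
      using Cons by (simp add: sum.atLeast_Suc_atMost sum.shift_bounds_cl_Suc_ivl del: sum.cl_ivl_Suc sum_of_bool_eq)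
    also have "(\<Sum>i = 1..length xs - 1. ?g (Suc i)) = list_turns (Some x) xs None"
      unfolding Cons.IH by (rule sum.cong) (auto simp: nth_Cons' simp del: sum_of_bool_eq)
    finally show ?thesis
      using Cons by (simp add: turn_at_def first_or_def del: sum_of_bool_eq)
  qed
qed

lemma runB_eq_list_turns: "runB p = 1 + list_turns None (0 # p) None"
proof -
  let ?P = "\<lambda>i. is_turn ((0 # p) ! (i - 1)) ((0 # p) ! i) ((0 # p) ! (i + 1))"
  have "runB p = 1 + card {i. 1 \<le> i \<and> i \<le> length p - 1 \<and> ?P i}"
    unfolding runB_def Let_def is_turn_def ..
  also have "{i. 1 \<le> i \<and> i \<le> length p - 1 \<and> ?P i} = {1..length p - 1} \<inter> {i. ?P i}"
    by auto
  also have "card \<dots> = (\<Sum>i = 1..length p - 1. of_bool (?P i))"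
    by (subst sum_of_bool_eq) auto
  also have "\<dots> = list_turns (Some 0) p None"
    by (rule list_turns_Some_eq_sum[symmetric])
  also have "\<dots> = list_turns None (0 # p) None"
    by (simp add: turn_at_def)
  finally show ?thesis .
qed

text \<open>\<open>turns dp t dq\<close> counts the peaks and valleys of the reading word of \<open>t\<close> between a left
  and a right neighbour outside \<open>t\<close>: \<open>None\<close> means that there is no neighbour, \<open>Some b\<close> that the
  neighbour lies above all labels of \<open>t\<close> iff \<open>b\<close>. In an HR-tree a parent lies above its subtree
  iff it is a max-node, and the two neighbours of a node with two subtrees lie on the same side
  of it.\<close>

definition root_turn :: "bool option \<Rightarrow> bool \<Rightarrow> bool \<Rightarrow> bool \<Rightarrow> bool option \<Rightarrow> nat" where
  "root_turn dp left_leaf right_leaf is_max dq =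
     (if \<not> left_leaf then 1
      else if right_leaf then of_bool (dp \<noteq> None \<and> dp = dq)
      else of_bool (dp = Some (\<not> is_max)))"

fun turns :: "bool option \<Rightarrow> int tree \<Rightarrow> bool option \<Rightarrow> nat" where
  "turns dp Leaf dq = 0"
| "turns dp (Node l a r) dq =
     turns dp l (Some (a = Max (set_tree (Node l a r))))
     + root_turn dp (l = Leaf) (r = Leaf) (a = Max (set_tree (Node l a r))) dq
     + turns (Some (a = Max (set_tree (Node l a r)))) r dq"

declare turns.simps(2) [simp del]

lemma turns_Node:
  assumes "set_tree (Node l a r) = S"
  shows "turns dp (Node l a r) dq =
    turns dp l (Some (a = Max S)) + root_turn dp (l = Leaf) (r = Leaf) (a = Max S) dq
    + turns (Some (a = Max S)) r dq"
  unfolding turns.simps(2) assms ..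

lemma turns_map_tree:
  assumes "strict_mono_on (set_tree t) g"
  shows "turns dp (map_tree g t) dq = turns dp t dq"
  using assms
proof (induction t arbitrary: dp dq)
  case Leaf
  then show ?case by simp
next
  case (Node l a r)
  let ?S = "set_tree (Node l a r)"
  have "strict_mono_on (set_tree l) g" "strict_mono_on (set_tree r) g"
    using Node.prems by (auto simp: strict_mono_on_def)
  note IH = Node.IH(1)[OF this(1)] Node.IH(2)[OF this(2)]
  have "finite ?S" "?S \<noteq> {}" by auto
  have top: "g a = Max (g ` ?S) \<longleftrightarrow> a = Max ?S"
    unfolding strict_mono_on_Max[OF Node.prems \<open>finite ?S\<close> \<open>?S \<noteq> {}\<close>]
    using inj_on_eq_iff[OF strict_mono_on_imp_inj_on[OF Node.prems]] Max_in[OF \<open>finite ?S\<close> \<open>?S \<noteq> {}\<close>]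
    by simp
  have "set_tree (Node (map_tree g l) (g a) (map_tree g r)) = g ` ?S"
    by (simp add: tree.set_map image_Un)
  from turns_Node[OF this] show ?case
    unfolding tree.map turns_Node[OF HOL.refl, where l = l and a = a and r = r] top IH eq_map_tree_Leaf .
qed

definition neighbour_above :: "int option \<Rightarrow> int tree \<Rightarrow> bool option" where
  "neighbour_above p t = map_option (\<lambda>p. \<forall>x\<in>set_tree t. x < p) p"

definition separated :: "int option \<Rightarrow> int tree \<Rightarrow> bool" where
  "separated p t \<longleftrightarrow> (\<forall>p'. p = Some p' \<longrightarrow> (\<forall>x\<in>set_tree t. x < p') \<or> (\<forall>x\<in>set_tree t. p' < x))"

lemma separated_SomeD:
  assumes "separated (Some p) t" "x \<in> set_tree t" "y \<in> set_tree t"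
  shows "x \<noteq> p" "x < p \<longleftrightarrow> y < p"
  using assms unfolding separated_def by (auto dest: less_asym)

lemma separated_subtree:
  assumes "separated p t" "set_tree s \<subseteq> set_tree t" "s \<noteq> Leaf"
  shows "separated p s" "neighbour_above p s = neighbour_above p t"
proof -
  show "separated p s" using assms(1,2) unfolding separated_def by blast
  obtain y where "y \<in> set_tree s" using assms(3) by (cases s) auto
  then show "neighbour_above p s = neighbour_above p t"
    using assms(1,2) unfolding separated_def neighbour_above_def by (cases p) (auto dest: less_asym)
qed

lemma separated_root:
  assumes "hr_cond (Node l a r)" "distinct (inorder (Node l a r))"
    "s \<in> {l, r}"
  shows "separated (Some a) s" "s \<noteq> Leaf \<Longrightarrow> neighbour_above (Some a) s = Some (a = Max (set_tree (Node l a r)))"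
proof -
  have side: "x < a \<longleftrightarrow> a = Max (set_tree (Node l a r))" "x \<noteq> a" if "x \<in> set_tree s" for x
    using hr_cond_less_root_iff[OF assms(1)] that assms(2,3) by auto
  then show "separated (Some a) s"
    unfolding separated_def by (cases "a = Max (set_tree (Node l a r))") (auto simp: neq_iff)
  show "neighbour_above (Some a) s = Some (a = Max (set_tree (Node l a r)))" if ne: "s \<noteq> Leaf"
  proof -
    obtain y where "y \<in> set_tree s" using ne by (cases s) auto
    then show ?thesis using side(1) unfolding neighbour_above_def by auto
  qed
qed

lemma turn_at_root:
  assumes "hr_cond (Node l a r)" "distinct (inorder (Node l a r))"
    "separated p (Node l a r)" "separated q (Node l a r)"
  shows "turn_at (last_or p (inorder l)) a (first_or (inorder r) q) =
    root_turn (neighbour_above p (Node l a r)) (l = Leaf) (r = Leaf) (a = Max (set_tree (Node l a r)))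
      (neighbour_above q (Node l a r))"
proof -
  let ?S = "set_tree (Node l a r)"
  have side: "x < a \<longleftrightarrow> a = Max ?S" if "x \<in> ?S" "x \<noteq> a" for x
    using hr_cond_less_root_iff[OF assms(1) that] .
  have p: "p' \<noteq> a" "neighbour_above p (Node l a r) = Some (a < p')" if "p = Some p'" for p'
    using separated_SomeD[of p' "Node l a r" a] assms(3) that
    unfolding neighbour_above_def by auto
  have q: "q' \<noteq> a" "neighbour_above q (Node l a r) = Some (a < q')" if "q = Some q'" for q'
    using separated_SomeD[of q' "Node l a r" a] assms(4) that
    unfolding neighbour_above_def by auto
  show ?thesis
  proof (cases "l = Leaf")
    case False
    then have "inorder r \<noteq> []" using hr_cond_NodeD(4)[OF assms(1) HOL.refl] by auto
    then obtain y ys where r: "inorder r = y # ys" by (cases "inorder r") auto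
    have "y \<in> ?S" "last (inorder l) \<in> ?S" "y \<noteq> a" "last (inorder l) \<noteq> a"
      using r False assms(2) by (auto simp flip: set_inorder)
    then have "is_turn (last (inorder l)) a y"
      using side[of y] side[of "last (inorder l)"] unfolding is_turn_def
      by (cases "a = Max ?S") (auto simp: neq_iff)
    then show ?thesis
      using False r by (simp add: turn_at_def last_or_def first_or_def root_turn_def)
  next
    case l: True
    show ?thesis
    proof (cases "r = Leaf")
      case True
      then show ?thesis
        using l p q unfolding turn_at_def last_or_def first_or_def root_turn_def is_turn_def
        by (cases p; cases q) (auto simp: neighbour_above_def)
    next
      case False
      then have "inorder r \<noteq> []" by auto
      then obtain y ys where r: "inorder r = y # ys" by (cases "inorder r") auto
      have "y < a \<longleftrightarrow> a = Max ?S" "y \<noteq> a"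
        using r assms(2) side[of y] by (auto simp flip: set_inorder)
      show ?thesis
      proof (cases p)
        case None
        then show ?thesis
          using l r by (simp add: turn_at_def first_or_def last_or_def root_turn_def neighbour_above_def)
      next
        case (Some p')
        then have "is_turn p' a y \<longleftrightarrow> (a < p' \<longleftrightarrow> a \<noteq> Max ?S)"
          using p(1) \<open>y < a \<longleftrightarrow> a = Max ?S\<close> \<open>y \<noteq> a\<close> unfolding is_turn_def by (auto simp: neq_iff)
        then show ?thesis
          using l r p(2) Some \<open>r \<noteq> Leaf\<close>
          by (simp add: turn_at_def first_or_def last_or_def root_turn_def)
      qed
    qed
  qed
qed

lemma list_turns_inorder:
  assumes "hr_cond t" "distinct (inorder t)" "separated p t" "separated q t"
  shows "list_turns p (inorder t) q = turns (neighbour_above p t) t (neighbour_above q t)"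
  using assms
proof (induction t arbitrary: p q)
  case Leaf
  then show ?case by simp
next
  case (Node l a r)
  let ?top = "a = Max (set_tree (Node l a r))"
  have hr: "hr_cond l" "hr_cond r"
    using hr_cond_NodeD(1,2)[OF Node.prems(1) HOL.refl] by blast+
  have d: "distinct (inorder l)" "distinct (inorder r)"
    using Node.prems(2) by auto
  have "list_turns p (inorder l) (Some a) = turns (neighbour_above p (Node l a r)) l (Some ?top)"
  proof (cases "l = Leaf")
    case False
    have "set_tree l \<subseteq> set_tree (Node l a r)" by auto
    note sep = separated_subtree[OF Node.prems(3) this False]
    show ?thesis
      using Node.IH(1)[OF hr(1) d(1) sep(1) separated_root(1)[OF Node.prems(1,2)]]
        sep(2) separated_root(2)[OF Node.prems(1,2) _ False] by simp
  qed simp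
  moreover have "list_turns (Some a) (inorder r) q = turns (Some ?top) r (neighbour_above q (Node l a r))"
  proof (cases "r = Leaf")
    case False
    have "set_tree r \<subseteq> set_tree (Node l a r)" by auto
    note sep = separated_subtree[OF Node.prems(4) this False]
    show ?thesis
      using Node.IH(2)[OF hr(2) d(2) separated_root(1)[OF Node.prems(1,2)] sep(1)]
        sep(2) separated_root(2)[OF Node.prems(1,2) _ False] by simp
  qed simp
  ultimately show ?case
    using turn_at_root[OF Node.prems]
    by (simp add: list_turns_append turns_Node[OF HOL.refl] first_or_def)
qed

section \<open>The action at a position of the reading word\<close>

declare relabel_node.simps(2) [simp del]

fun psi_nth :: "nat \<Rightarrow> int tree \<Rightarrow> int tree" where
  "psi_nth i Leaf = Leaf"
| "psi_nth i (Node l a r) =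
     (if i < size l then Node (psi_nth i l) a r
      else if i = size l then relabel_node (Node l a r)
      else Node l a (psi_nth (i - size l - 1) r))"

lemma psi_at_notin: "c \<notin> set_tree t \<Longrightarrow> psi_at c t = t"
  by (induction t) auto

lemma psi_at_inorder_nth:
  assumes "distinct (inorder t)" "i < size t"
  shows "psi_at (inorder t ! i) t = psi_nth i t"
  using assms
proof (induction t arbitrary: i)
  case Leaf
  then show ?case by simp
next
  case (Node l a r)
  consider "i < size l" | "i = size l" | "size l < i" by linarith
  then show ?case
  proof cases
    case 1
    then have c: "inorder (Node l a r) ! i = inorder l ! i"
      by (simp add: nth_append)
    have "inorder l ! i \<in> set_tree l"
      using 1 by (metis length_inorder nth_mem set_inorder)
    then have "a \<noteq> inorder l ! i" "psi_at (inorder l ! i) r = r"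
      using Node.prems(1) psi_at_notin[of "inorder l ! i" r] by auto
    moreover have "psi_at (inorder l ! i) l = psi_nth i l"
      using Node.IH(1) Node.prems(1) 1 by simp
    ultimately show ?thesis
      unfolding c using 1 by simp
  next
    case 2
    then show ?thesis by (simp add: nth_append)
  next
    case 3
    define j where "j = i - size l - 1"
    have j: "j < size r" "i = size l + 1 + j"
      using 3 Node.prems(2) by (auto simp: j_def)
    then have c: "inorder (Node l a r) ! i = inorder r ! j"
      by (simp add: nth_append)
    have "inorder r ! j \<in> set_tree r"
      using j by (metis length_inorder nth_mem set_inorder)
    then have "a \<noteq> inorder r ! j" "psi_at (inorder r ! j) l = l"
      using Node.prems(1) psi_at_notin[of "inorder r ! j" l] by auto
    moreover have "psi_at (inorder r ! j) r = psi_nth j r"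
      using Node.IH(2) Node.prems(1) j by simp
    ultimately show ?thesis
      unfolding c using j by simp
  qed
qed

lemma psi_eq_psi_nth: "distinct (inorder t) \<Longrightarrow> i < size t \<Longrightarrow> psi i t = psi_nth i t"
  unfolding psi_def by (rule psi_at_inorder_nth)

fun flip_root :: "int tree \<Rightarrow> int tree" where
  "flip_root Leaf = Leaf"
| "flip_root (Node l a r) =
     (let S = set_tree (Node l a r); a' = (if a = Min S then Max S else Min S)
      in Node l a' (map_tree (op_bij (set_tree r) (insert a (set_tree r) - {a'})) r))"

declare flip_root.simps(2) [simp del]

lemma relabel_node_eq_flip_root:
  assumes "hr_cond (Node l a r)" "r \<noteq> Leaf" "l \<noteq> Node Leaf 0 Leaf" "0 \<notin> set_tree r"
  shows "relabel_node (Node l a r) = flip_root (Node l a r)"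
proof -
  let ?S = "set_tree (Node l a r)" and ?R = "insert a (set_tree r)"
  have cases: "(l = Leaf \<and> r = Leaf) = False" "(l = Node Leaf 0 Leaf \<or> r = Node Leaf 0 Leaf) = False"
    using assms(2-4) by auto
  have relabel: "relabel_node (Node l a r) =
      (if a = Min ?S then Node l (Max ?R) (map_tree (op_bij (set_tree r) (?R - {Max ?R})) r)
       else if a = Max ?S then Node l (Min ?R) (map_tree (op_bij (set_tree r) (?R - {Min ?R})) r)
       else Node l a r)"
    unfolding relabel_node.simps(2) Let_def cases if_False by (rule HOL.refl)
  have S: "finite ?S" "?R \<subseteq> ?S" by auto
  show ?thesis
  proof (cases "a = Min ?S")
    case True
    then have "Max ?S \<in> set_tree r"
      using hr_cond_NodeD(5)[OF assms(1) HOL.refl assms(2)] by blast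
    then have "Max ?R = Max ?S"
      using S by (intro Max_eqI) auto
    then show ?thesis
      using relabel True by (simp add: flip_root.simps Let_def)
  next
    case False
    then have max: "a = Max ?S"
      using hr_cond_NodeD(3)[OF assms(1) HOL.refl] by blast
    then have "Min ?S \<in> set_tree r"
      using hr_cond_NodeD(6)[OF assms(1) HOL.refl assms(2)] by blast
    then have "Min ?R = Min ?S"
      using S by (intro Min_eqI) auto
    then show ?thesis
      using relabel False max by (simp add: flip_root.simps Let_def)
  qed
qed

locale hr_node =
  fixes l r :: "int tree" and a :: int
  assumes hr: "hr_cond (Node l a r)"
    and distinct: "distinct (inorder (Node l a r))"
    and right_nonempty: "r \<noteq> Leaf"
begin

definition labels :: "int set" where
  "labels = set_tree (Node l a r)"

definition new_root :: int where
  "new_root = (if a = Min labels then Max labels else Min labels)"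

definition right_map :: "int \<Rightarrow> int" where
  "right_map = op_bij (set_tree r) (insert a (set_tree r) - {new_root})"

lemma flip_root_eq: "flip_root (Node l a r) = Node l new_root (map_tree right_map r)"
  unfolding flip_root.simps Let_def new_root_def right_map_def labels_def ..

lemma finite_labels: "finite labels" and labels_nonempty: "labels \<noteq> {}"
  by (auto simp: labels_def)

lemma root_extreme: "a = Min labels \<or> a = Max labels"
  using hr_cond_NodeD(3)[OF hr] by (simp add: labels_def)

lemma root_notin_right: "a \<notin> set_tree r"
  using distinct by simp

lemma Min_ne_Max: "Min labels \<noteq> Max labels"
proof -
  obtain x where "x \<in> set_tree r" using right_nonempty by (cases r) auto
  then have "x \<in> labels" "x \<noteq> a" using root_notin_right by (auto simp: labels_def)
  moreover have "a \<in> labels" by (simp add: labels_def)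
  ultimately have "Min labels \<le> x" "x \<le> Max labels" "Min labels \<le> a" "a \<le> Max labels" "x \<noteq> a"
    using finite_labels by auto
  then show ?thesis by linarith
qed

lemma new_root_in_right: "new_root \<in> set_tree r"
  using hr_cond_NodeD(5,6)[OF hr labels_def[symmetric] right_nonempty] root_extreme
  unfolding new_root_def by auto

lemma new_root_extreme: "new_root = Min labels \<or> new_root = Max labels"
  unfolding new_root_def by simp

lemma new_root_ne_root: "new_root \<noteq> a"
  using root_notin_right new_root_in_right by auto

lemma new_root_eq_Max_iff: "new_root = Max labels \<longleftrightarrow> a \<noteq> Max labels"
  using Min_ne_Max root_extreme unfolding new_root_def by auto

lemma
  shows strict_mono_right_map: "strict_mono_on (set_tree r) right_map"
    and right_map_image: "right_map ` set_tree r = insert a (set_tree r) - {new_root}"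
proof -
  have "card (set_tree r) = card (insert a (set_tree r) - {new_root})"
    using root_notin_right new_root_in_right by (simp add: card_Diff_singleton)
  then show "strict_mono_on (set_tree r) right_map" "right_map ` set_tree r = insert a (set_tree r) - {new_root}"
    unfolding right_map_def by (simp_all add: strict_mono_on_op_bij op_bij_image)
qed

lemma set_tree_flip_root: "set_tree (flip_root (Node l a r)) = labels"
  using right_map_image new_root_in_right unfolding flip_root_eq labels_def
  by (auto simp: tree.set_map)

lemma hr_node_flip_root: "hr_node l (map_tree right_map r) new_root"
proof
  have set_eq: "set_tree (Node l new_root (map_tree right_map r)) = labels"
    using set_tree_flip_root by (simp add: flip_root_eq)
  have right_labels: "set_tree (map_tree right_map r) = insert a (set_tree r) - {new_root}"
    using right_map_image by (simp add: tree.set_map)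
  show "hr_cond (Node l new_root (map_tree right_map r))"
  proof (rule hr_cond_NodeI[OF _ _ set_eq])
    show "hr_cond l" using hr_cond_NodeD(1)[OF hr HOL.refl] .
    show "hr_cond (map_tree right_map r)"
      using hr_cond_NodeD(2)[OF hr HOL.refl] hr_cond_map_tree[OF strict_mono_right_map] by simp
    show "new_root = Min labels \<or> new_root = Max labels"
      unfolding new_root_def by simp
    show "map_tree right_map r \<noteq> Leaf" using right_nonempty by simp
    show "Max labels \<in> set_tree (map_tree right_map r)" if "new_root = Min labels"
      using that root_extreme Min_ne_Max new_root_ne_root unfolding right_labels
      by (auto simp: labels_def)
    show "Min labels \<in> set_tree (map_tree right_map r)" if "new_root = Max labels"
      using that root_extreme Min_ne_Max new_root_ne_root unfolding right_labels
      by (auto simp: labels_def)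
  qed
  have "distinct (map right_map (inorder r))"
    using distinct strict_mono_on_imp_inj_on[OF strict_mono_right_map] by (simp add: distinct_map)
  moreover have "new_root \<notin> set_tree l" "set_tree l \<inter> insert a (set_tree r) = {}"
    using distinct new_root_in_right by auto
  ultimately show "distinct (inorder (Node l new_root (map_tree right_map r)))"
    using distinct by (auto simp: inorder_map right_map_image)
  show "map_tree right_map r \<noteq> Leaf" using right_nonempty by simp
qed

lemma flip_root_involutive: "flip_root (flip_root (Node l a r)) = Node l a r"
proof -
  interpret flipped: hr_node l "map_tree right_map r" new_root
    by (rule hr_node_flip_root)
  have labels: "flipped.labels = labels"
    using set_tree_flip_root by (simp add: flipped.labels_def flip_root_eq)
  have root: "flipped.new_root = a"
    using root_extreme new_root_extreme Min_ne_Max new_root_ne_root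
    unfolding flipped.new_root_def labels by auto
  have "insert new_root (right_map ` set_tree r) - {a} = set_tree r"
    using right_map_image new_root_in_right root_notin_right by auto
  then have "flipped.right_map = op_bij (right_map ` set_tree r) (set_tree r)"
    unfolding flipped.right_map_def root by (simp add: tree.set_map)
  then have "flipped.right_map (right_map x) = x" if "x \<in> set_tree r" for x
    using op_bij_image_strict_mono[OF strict_mono_right_map that] op_bij_self[OF _ that] by simp
  then have "map_tree flipped.right_map (map_tree right_map r) = r"
    by (simp add: tree.map_comp comp_def tree.map_ident_strong)
  then show ?thesis
    using flipped.flip_root_eq root by (simp add: flip_root_eq)
qed

lemma turns_flip_root:
  "turns dp (flip_root (Node l a r)) dq =
     turns dp l (Some (a \<noteq> Max labels)) + root_turn dp (l = Leaf) False (a \<noteq> Max labels) dq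
     + turns (Some (a \<noteq> Max labels)) r dq"
  using turns_Node[OF set_tree_flip_root[unfolded flip_root_eq]] new_root_eq_Max_iff
    turns_map_tree[OF strict_mono_right_map] right_nonempty
  by (simp add: flip_root_eq)

lemma flip_root_map_tree:
  assumes "strict_mono_on labels g"
  shows "flip_root (map_tree g (Node l a r)) = map_tree g (flip_root (Node l a r))"
proof -
  have inj: "inj_on g labels"
    using assms by (rule strict_mono_on_imp_inj_on)
  interpret mapped: hr_node "map_tree g l" "map_tree g r" "g a"
  proof
    show "hr_cond (Node (map_tree g l) (g a) (map_tree g r))"
      using hr hr_cond_map_tree[of "Node l a r" g] assms by (simp add: labels_def)
    show "distinct (inorder (Node (map_tree g l) (g a) (map_tree g r)))"
      using distinct inj_on_subset[OF inj] by (auto simp: labels_def inorder_map distinct_map)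
    show "map_tree g r \<noteq> Leaf" using right_nonempty by simp
  qed
  have labels: "mapped.labels = g ` labels"
    by (simp add: mapped.labels_def labels_def tree.set_map image_Un)
  have extremes: "Min (g ` labels) = g (Min labels)" "Max (g ` labels) = g (Max labels)"
    using strict_mono_on_Min[OF assms finite_labels labels_nonempty]
      strict_mono_on_Max[OF assms finite_labels labels_nonempty] by auto
  have "a \<in> labels" "Min labels \<in> labels" "Max labels \<in> labels"
    using Min_in[OF finite_labels labels_nonempty] Max_in[OF finite_labels labels_nonempty]
    by (auto simp: labels_def)
  then have root: "mapped.new_root = g new_root"
    unfolding mapped.new_root_def new_root_def labels extremes
    using inj_on_eq_iff[OF inj] by auto
  have sub: "insert a (set_tree r) - {new_root} \<subseteq> labels" "set_tree r \<subseteq> labels"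
    by (auto simp: labels_def)
  have "insert (g a) (g ` set_tree r) - {g new_root} = g ` (insert a (set_tree r) - {new_root})"
    using inj_on_image_set_diff[OF inj] sub new_root_in_right by auto
  then have "mapped.right_map (g x) = g (right_map x)" if "x \<in> set_tree r" for x
    unfolding mapped.right_map_def root right_map_def
    using op_bij_conj[of "set_tree r" "insert a (set_tree r) - {new_root}" g x] that
      root_notin_right new_root_in_right sub monotone_on_subset[OF assms]
    by (auto simp: tree.set_map card_Diff_singleton)
  then show ?thesis
    using mapped.flip_root_eq root by (simp add: flip_root_eq tree.map_comp comp_def cong: tree.map_cong)
qed

end

lemma psi_nth_map_tree:
  assumes "hr_cond t" "distinct (inorder t)" "0 \<notin> set_tree t" "0 \<notin> g ` set_tree t"
    "strict_mono_on (set_tree t) g"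
  shows "psi_nth i (map_tree g t) = map_tree g (psi_nth i t)"
  using assms
proof (induction t arbitrary: i)
  case Leaf
  then show ?case by simp
next
  case (Node l a r)
  have sub: "hr_cond l" "hr_cond r" "distinct (inorder l)" "distinct (inorder r)"
    "strict_mono_on (set_tree l) g" "strict_mono_on (set_tree r) g"
    using Node.prems hr_cond_NodeD(1,2)[OF Node.prems(1) HOL.refl]
    by (auto intro: monotone_on_subset)
  have root: "relabel_node (map_tree g (Node l a r)) = map_tree g (relabel_node (Node l a r))"
  proof (cases "r = Leaf")
    case True
    then have "l = Leaf" using hr_cond_NodeD(4)[OF Node.prems(1) HOL.refl] by blast
    then show ?thesis using True by (simp add: relabel_node.simps)
  next
    case False
    interpret hr_node l r a using Node.prems(1,2) False by unfold_locales
    have "hr_cond (map_tree g (Node l a r))"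
      using Node.prems(1,5) hr_cond_map_tree by blast
    moreover have "map_tree g l \<noteq> Node Leaf 0 Leaf"
      using Node.prems(4) by (cases l) auto
    ultimately have "relabel_node (map_tree g (Node l a r)) = flip_root (map_tree g (Node l a r))"
      using relabel_node_eq_flip_root[of "map_tree g l" "g a" "map_tree g r"] False Node.prems(4)
      by (auto simp: tree.set_map)
    also have "\<dots> = map_tree g (flip_root (Node l a r))"
      using flip_root_map_tree Node.prems(5) by (simp add: labels_def)
    also have "flip_root (Node l a r) = relabel_node (Node l a r)"
    proof -
      have "l \<noteq> Node Leaf 0 Leaf" using Node.prems(3) by auto
      then show ?thesis
        using relabel_node_eq_flip_root[OF Node.prems(1) False] Node.prems(3) by simp
    qed
    finally show ?thesis .
  qed
  show ?case
    using Node.IH(1)[OF sub(1,3) _ _ sub(5)] Node.IH(2)[OF sub(2,4) _ _ sub(6)] Node.prems(3,4) root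
    by auto
qed

context hr_node
begin

lemma psi_nth_flip_root_left:
  assumes "i < size l" "set_tree (psi_nth i l) = set_tree l"
  shows "psi_nth i (flip_root (Node l a r)) = flip_root (Node (psi_nth i l) a r)"
proof -
  have "set_tree (Node (psi_nth i l) a r) = labels"
    using assms(2) by (simp add: labels_def)
  then have "flip_root (Node (psi_nth i l) a r) = Node (psi_nth i l) new_root (map_tree right_map r)"
    unfolding flip_root.simps Let_def new_root_def right_map_def by simp
  then show ?thesis using assms(1) by (simp add: flip_root_eq)
qed

lemma psi_nth_flip_root_right:
  assumes "j < size r" "set_tree (psi_nth j r) = set_tree r" "0 \<notin> insert a (set_tree r)"
  shows "psi_nth (size l + 1 + j) (flip_root (Node l a r)) = flip_root (Node l a (psi_nth j r))"
proof -
  have "set_tree (Node l a (psi_nth j r)) = labels"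
    using assms(2) by (simp add: labels_def)
  then have "flip_root (Node l a (psi_nth j r)) = Node l new_root (map_tree right_map (psi_nth j r))"
    unfolding flip_root.simps Let_def new_root_def right_map_def assms(2) by simp
  moreover have "psi_nth j (map_tree right_map r) = map_tree right_map (psi_nth j r)"
  proof (rule psi_nth_map_tree)
    show "hr_cond r" using hr_cond_NodeD(2)[OF hr HOL.refl] .
    show "distinct (inorder r)" using distinct by simp
    show "0 \<notin> set_tree r" "0 \<notin> right_map ` set_tree r"
      using assms(3) right_map_image by auto
  qed (rule strict_mono_right_map)
  ultimately show ?thesis using assms(1) by (simp add: flip_root_eq)
qed

end

section \<open>Orbits\<close>

text \<open>\<open>admissible True t\<close>: \<open>t\<close> is an HR-tree whose reading word starts with \<open>0\<close> (a subtree
  on the left spine of a tree in \<open>BHR\<^sub>n\<close>); \<open>admissible False t\<close>: \<open>t\<close> is an HR-tree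
  not containing \<open>0\<close>.\<close>

definition admissible :: "bool \<Rightarrow> int tree \<Rightarrow> bool" where
  "admissible z t \<longleftrightarrow> is_HR t \<and> (if z then t \<noteq> Leaf \<longrightarrow> hd (inorder t) = 0 else 0 \<notin> set_tree t)"

text \<open>The root of \<open>Node l a r\<close> is moved by the action unless it is a leaf, the node \<open>0\<close> itself
  (which is \<open>\<pi>\<^sub>0\<close>, never acted on), or the parent of the leaf \<open>0\<close>.\<close>

definition active :: "bool \<Rightarrow> int tree \<Rightarrow> int tree \<Rightarrow> bool" where
  "active z l r \<longleftrightarrow> \<not> (z \<and> l = Leaf) \<and> \<not> (l = Leaf \<and> r = Leaf) \<and> l \<noteq> Node Leaf 0 Leaf"

text \<open>Recursive description of the orbit (see \<open>Orb_eq_orbit\<close>): the subtrees move independently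
  and an active root may in addition be flipped.\<close>

fun orbit :: "bool \<Rightarrow> int tree \<Rightarrow> int tree set" where
  "orbit z Leaf = {Leaf}"
| "orbit z (Node l a r) =
     (let U = (\<lambda>(l', r'). Node l' a r') ` (orbit z l \<times> orbit False r)
      in if active z l r then U \<union> flip_root ` U else U)"

lemma orbit_NodeE:
  assumes "s \<in> orbit z (Node l a r)"
  obtains l' r' where "l' \<in> orbit z l" "r' \<in> orbit False r" "s = Node l' a r'"
  | l' r' where "l' \<in> orbit z l" "r' \<in> orbit False r" "s = flip_root (Node l' a r')" "active z l r"
  using assms by (auto simp: Let_def split: if_splits)

lemma orbit_NodeI:
  assumes "l' \<in> orbit z l" "r' \<in> orbit False r"
  shows "Node l' a r' \<in> orbit z (Node l a r)"
    and "active z l r \<Longrightarrow> flip_root (Node l' a r') \<in> orbit z (Node l a r)"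
  using assms by (auto simp: Let_def)

lemma finite_orbit: "finite (orbit z t)"
  by (induction t arbitrary: z) (auto simp: Let_def)

lemma self_in_orbit: "t \<in> orbit z t"
proof (induction t arbitrary: z)
  case (Node l a r)
  then show ?case by (intro orbit_NodeI(1))
qed simp

lemma hd_inorder_Node: "l \<noteq> Leaf \<Longrightarrow> hd (inorder (Node l a r)) = hd (inorder l)"
  by (cases l) (simp_all add: hd_append)

lemma hd_inorder_in_set_tree:
  assumes "t \<noteq> Leaf"
  shows "hd (inorder t) \<in> set_tree t"
proof -
  have "inorder t \<noteq> []" using assms by (cases t) auto
  then show ?thesis using hd_in_set[of "inorder t"] by simp
qed

lemma admissible_Node:
  assumes "admissible z (Node l a r)"
  shows "admissible z l" "admissible False r"
proof -
  have HR: "hr_cond (Node l a r)" "distinct (inorder (Node l a r))"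
    using assms by (simp_all add: admissible_def is_HR_def)
  then have hr: "hr_cond l" "hr_cond r" and d: "distinct (inorder l)" "distinct (inorder r)"
    using hr_cond_NodeD(1,2)[OF HR(1) HOL.refl] by auto
  have zero: "0 \<in> insert a (set_tree l)" if "z"
  proof (cases "l = Leaf")
    case False
    then show ?thesis
      using assms that hd_inorder_Node[OF False] hd_inorder_in_set_tree[OF False]
      by (simp add: admissible_def)
  qed (use assms that in \<open>simp add: admissible_def\<close>)
  show "admissible z l"
    using assms hr d hd_inorder_Node[of l a r] by (auto simp: admissible_def is_HR_def)
  show "admissible False r"
    using assms hr d zero HR(2) by (cases z) (auto simp: admissible_def is_HR_def)
qed

lemma admissible_NodeI:
  assumes "admissible z (Node l a r)" "admissible z l'" "admissible False r'"
    "set_tree l' = set_tree l" "set_tree r' = set_tree r"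
    "(l' = Leaf) = (l = Leaf)" "(r' = Leaf) = (r = Leaf)"
  shows "admissible z (Node l' a r')"
proof -
  have hr: "hr_cond (Node l a r)" and d: "distinct (inorder (Node l a r))"
    using assms(1) by (auto simp: admissible_def is_HR_def)
  have S: "set_tree (Node l' a r') = set_tree (Node l a r)"
    using assms(4,5) by simp
  have sub: "hr_cond l'" "hr_cond r'" "distinct (inorder l')" "distinct (inorder r')"
    using assms(2,3) by (simp_all add: admissible_def is_HR_def)
  have "hr_cond (Node l' a r')"
  proof (rule hr_cond_NodeI[OF sub(1,2) S])
    note hr_l = hr_cond_NodeD[OF hr HOL.refl]
    show "a = Min (set_tree (Node l a r)) \<or> a = Max (set_tree (Node l a r))" by (rule hr_l(3))
    show "l' \<noteq> Leaf \<Longrightarrow> r' \<noteq> Leaf" using hr_l(4) assms(6,7) by blast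
    show "r' \<noteq> Leaf \<Longrightarrow> a = Min (set_tree (Node l a r)) \<Longrightarrow> Max (set_tree (Node l a r)) \<in> set_tree r'"
      using hr_l(5) assms(5,7) by blast
    show "r' \<noteq> Leaf \<Longrightarrow> a = Max (set_tree (Node l a r)) \<Longrightarrow> Min (set_tree (Node l a r)) \<in> set_tree r'"
      using hr_l(6) assms(5,7) by blast
  qed
  moreover have "distinct (inorder (Node l' a r'))"
    using d sub(3,4) assms(4,5) by simp
  moreover have "hd (inorder (Node l' a r')) = 0" if z
    using assms(1,2,6) that hd_inorder_Node[of l' a r'] by (cases "l = Leaf") (auto simp: admissible_def)
  ultimately show ?thesis
    using assms(1) S by (auto simp: admissible_def is_HR_def)
qed

lemma
  assumes "admissible z (Node l a r)" "active z l r"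
  shows active_hr_node: "hr_node l r a"
    and active_zero_notin: "0 \<notin> insert a (set_tree r)"
proof -
  have hr: "hr_cond (Node l a r)" and d: "distinct (inorder (Node l a r))"
    using assms(1) by (auto simp: admissible_def is_HR_def)
  show "hr_node l r a"
    using hr d hr_cond_NodeD(4)[OF hr HOL.refl] assms(2) by unfold_locales (auto simp: active_def)
  have "a \<noteq> 0"
  proof (cases z)
    case True
    then have "l \<noteq> Leaf" using assms(2) by (simp add: active_def)
    then have "0 \<in> set_tree l"
      using assms(1) True hd_inorder_Node hd_inorder_in_set_tree by (fastforce simp: admissible_def)
    then show ?thesis using d by auto
  qed (use assms(1) in \<open>simp add: admissible_def\<close>)
  then show "0 \<notin> insert a (set_tree r)"
    using admissible_Node(2)[OF assms(1)] by (simp add: admissible_def)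
qed

lemma relabel_node_active:
  assumes "admissible z (Node l a r)" "active z l r"
  shows "relabel_node (Node l a r) = flip_root (Node l a r)"
  using relabel_node_eq_flip_root hr_node.hr hr_node.right_nonempty
    active_hr_node[OF assms] active_zero_notin[OF assms] assms(2)
  by (simp add: active_def)

lemma admissible_flip_root:
  assumes "admissible z (Node l a r)" "active z l r"
  shows "admissible z (flip_root (Node l a r))"
proof -
  interpret hr_node l r a using active_hr_node[OF assms] .
  interpret flipped: hr_node l "map_tree right_map r" new_root by (rule hr_node_flip_root)
  have "hd (inorder (flip_root (Node l a r))) = 0" if z
    using assms that hd_inorder_Node by (auto simp: admissible_def active_def flip_root_eq)
  moreover have "0 \<notin> labels" if "\<not> z"
    using assms(1) that by (simp add: admissible_def labels_def)
  ultimately show ?thesis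
    using flipped.hr flipped.distinct set_tree_flip_root
    by (auto simp: admissible_def is_HR_def flip_root_eq)
qed

lemma relabel_node_flip_root:
  assumes "admissible z (Node l a r)" "active z l r"
  shows "relabel_node (flip_root (Node l a r)) = Node l a r"
proof -
  interpret hr_node l r a using active_hr_node[OF assms] .
  have "active z l (map_tree right_map r)"
    using assms(2) by (simp add: active_def)
  moreover have "admissible z (Node l new_root (map_tree right_map r))"
    using admissible_flip_root[OF assms] by (simp add: flip_root_eq)
  ultimately have "relabel_node (flip_root (Node l a r)) = flip_root (flip_root (Node l a r))"
    using relabel_node_active by (simp add: flip_root_eq)
  then show ?thesis by (simp add: flip_root_involutive)
qed

abbreviation shape :: "'a tree \<Rightarrow> unit tree" where
  "shape t \<equiv> map_tree (\<lambda>_. ()) t"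

lemma shape_eq_Leaf_iff: "shape s = shape t \<Longrightarrow> s = Leaf \<longleftrightarrow> t = Leaf"
  by (metis eq_map_tree_Leaf)

lemma shape_eq_single_iff:
  assumes "shape s = shape t" "set_tree s = set_tree t"
  shows "s = Node Leaf x Leaf \<longleftrightarrow> t = Node Leaf x Leaf"
  using assms by (cases s; cases t) auto

lemma admissible_Node_cong:
  assumes "admissible z (Node l a r)" "admissible z l'" "admissible False r'"
    "set_tree l' = set_tree l" "set_tree r' = set_tree r" "shape l' = shape l" "shape r' = shape r"
  shows "admissible z (Node l' a r')" "active z l' r' = active z l r"
  using admissible_NodeI[OF assms(1-5)] shape_eq_Leaf_iff[OF assms(6)] shape_eq_Leaf_iff[OF assms(7)]
    shape_eq_single_iff[OF assms(6,4), of 0]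
  by (simp_all add: active_def)

lemma orbit_invariant:
  assumes "admissible z t" "s \<in> orbit z t"
  shows "admissible z s \<and> set_tree s = set_tree t \<and> shape s = shape t"
  using assms
proof (induction t arbitrary: s z)
  case Leaf
  then show ?case by simp
next
  case (Node l a r)
  have unflipped: "admissible z (Node l' a r') \<and> set_tree (Node l' a r') = set_tree (Node l a r)
      \<and> shape (Node l' a r') = shape (Node l a r) \<and> active z l' r' = active z l r"
    if "l' \<in> orbit z l" "r' \<in> orbit False r" for l' r'
    using Node.IH(1)[OF admissible_Node(1)[OF Node.prems(1)] that(1)]
      Node.IH(2)[OF admissible_Node(2)[OF Node.prems(1)] that(2)]
      admissible_Node_cong[OF Node.prems(1)] by simp
  from Node.prems(2) show ?case
  proof (cases rule: orbit_NodeE)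
    case (1 l' r')
    then show ?thesis using unflipped by blast
  next
    case (2 l' r')
    note same = unflipped[OF 2(1,2)]
    then have "active z l' r'" using 2(4) by blast
    then interpret hr_node l' r' a using active_hr_node same by blast
    have "admissible z (flip_root (Node l' a r'))"
      using admissible_flip_root \<open>active z l' r'\<close> same by blast
    then show ?thesis
      using same set_tree_flip_root 2(3) by (simp add: flip_root_eq labels_def tree.map_comp comp_def)
  qed
qed

lemma orbit_Node_parts:
  assumes "admissible z (Node l a r)" "l' \<in> orbit z l" "r' \<in> orbit False r"
  shows "admissible z (Node l' a r')" "active z l' r' = active z l r"
    "set_tree l' = set_tree l" "set_tree r' = set_tree r" "size l' = size l" "size r' = size r"
    "(l' = Leaf) = (l = Leaf)" "(r' = Leaf) = (r = Leaf)"
proof -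
  note left = orbit_invariant[OF admissible_Node(1)[OF assms(1)] assms(2)]
  note right = orbit_invariant[OF admissible_Node(2)[OF assms(1)] assms(3)]
  show "admissible z (Node l' a r')" "active z l' r' = active z l r"
    using admissible_Node_cong[OF assms(1)] left right by blast+
  show "set_tree l' = set_tree l" "set_tree r' = set_tree r" using left right by blast+
  show "size l' = size l" "size r' = size r" using left right by (metis size_map_tree)+
  show "(l' = Leaf) = (l = Leaf)" "(r' = Leaf) = (r = Leaf)"
    using left right shape_eq_Leaf_iff by blast+
qed

lemma relabel_node_inactive:
  "l = Leaf \<and> r = Leaf \<or> l = Node Leaf 0 Leaf \<Longrightarrow> relabel_node (Node l a r) = Node l a r"
  by (auto simp: relabel_node.simps)

lemma Node_position_cases:
  assumes "i < size (Node l a r)"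
  obtains (left) "i < size l" | (root) "i = size l" | (right) j where "i = size l + 1 + j" "j < size r"
proof -
  have "i < size l \<or> i = size l \<or> (\<exists>j. i = size l + 1 + j \<and> j < size r)"
    using assms by (cases "size l < i") (auto intro!: exI[of _ "i - size l - 1"])
  then show ?thesis using that by blast
qed

context
  fixes z :: bool and l r :: "int tree" and a :: int
  assumes admissible: "admissible z (Node l a r)"
    and closed_left: "\<And>s i. s \<in> orbit z l \<Longrightarrow> i < size l \<Longrightarrow> (z \<Longrightarrow> i \<noteq> 0)
      \<Longrightarrow> psi_nth i s \<in> orbit z l"
    and closed_right: "\<And>s j. s \<in> orbit False r \<Longrightarrow> j < size r \<Longrightarrow> psi_nth j s \<in> orbit False r"
begin

lemma psi_nth_Node_in_orbit:
  assumes "l' \<in> orbit z l" "r' \<in> orbit False r" "i < size (Node l a r)" "z \<Longrightarrow> i \<noteq> 0"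
  shows "psi_nth i (Node l' a r') \<in> orbit z (Node l a r)"
proof -
  note parts = orbit_Node_parts[OF admissible assms(1,2)]
  from assms(3) show ?thesis
  proof (cases rule: Node_position_cases)
    case left
    then show ?thesis
      using closed_left[OF assms(1) left assms(4)] parts(5) orbit_NodeI(1)[OF _ assms(2)] by simp
  next
    case root
    show ?thesis
    proof (cases "active z l r")
      case True
      then have "psi_nth i (Node l' a r') = flip_root (Node l' a r')"
        using relabel_node_active[OF parts(1)] parts root by simp
      then show ?thesis using orbit_NodeI(2)[OF assms(1,2) True] by simp
    next
      case False
      then have "l' = Leaf \<and> r' = Leaf \<or> l' = Node Leaf 0 Leaf"
        using parts(2,5) assms(4) root by (auto simp: active_def)
      then have "psi_nth i (Node l' a r') = Node l' a r'"
        using relabel_node_inactive root parts(5) by simp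
      then show ?thesis using orbit_NodeI(1)[OF assms(1,2)] by simp
    qed
  next
    case (right j)
    then show ?thesis
      using closed_right[OF assms(2) right(2)] parts(5) orbit_NodeI(1)[OF assms(1)] by simp
  qed
qed

lemma psi_nth_flip_root_in_orbit:
  assumes "l' \<in> orbit z l" "r' \<in> orbit False r" "active z l r"
    "i < size (Node l a r)" "z \<Longrightarrow> i \<noteq> 0"
  shows "psi_nth i (flip_root (Node l' a r')) \<in> orbit z (Node l a r)"
proof -
  note parts = orbit_Node_parts[OF admissible assms(1,2)]
  have active: "active z l' r'" using parts(2) assms(3) by simp
  interpret hr_node l' r' a using active_hr_node[OF parts(1) active] .
  from assms(4) show ?thesis
  proof (cases rule: Node_position_cases)
    case left
    then have "psi_nth i l' \<in> orbit z l"
      using closed_left[OF assms(1) left assms(5)] by simp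
    moreover have "psi_nth i (flip_root (Node l' a r')) = flip_root (Node (psi_nth i l') a r')"
      using psi_nth_flip_root_left left parts(3,5) orbit_Node_parts(3)[OF admissible calculation assms(2)]
      by simp
    ultimately show ?thesis using orbit_NodeI(2)[OF _ assms(2,3)] by simp
  next
    case root
    then have "psi_nth i (flip_root (Node l' a r')) = Node l' a r'"
      using relabel_node_flip_root[OF parts(1) active] parts(5) by (simp add: flip_root_eq)
    then show ?thesis using orbit_NodeI(1)[OF assms(1,2)] by simp
  next
    case (right j)
    then have "psi_nth j r' \<in> orbit False r"
      using closed_right[OF assms(2) right(2)] by simp
    moreover have "psi_nth i (flip_root (Node l' a r')) = flip_root (Node l' a (psi_nth j r'))"
      using psi_nth_flip_root_right right parts(4-6) active_zero_notin[OF parts(1) active]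
        orbit_Node_parts(4)[OF admissible assms(1) calculation] by simp
    ultimately show ?thesis using orbit_NodeI(2)[OF assms(1) _ assms(3)] by simp
  qed
qed

end

lemma orbit_closed:
  assumes "admissible z t" "s \<in> orbit z t" "i < size t" "z \<Longrightarrow> i \<noteq> 0"
  shows "psi_nth i s \<in> orbit z t"
  using assms
proof (induction t arbitrary: s z i)
  case (Node l a r)
  note closed_left = Node.IH(1)[OF admissible_Node(1)[OF Node.prems(1)]]
    and closed_right = Node.IH(2)[OF admissible_Node(2)[OF Node.prems(1)]]
  from Node.prems(2) show ?case
  proof (cases rule: orbit_NodeE)
    case (1 l' r')
    then show ?thesis
      using psi_nth_Node_in_orbit[OF Node.prems(1) closed_left closed_right] Node.prems(3,4) by simp
  next
    case (2 l' r')
    then show ?thesis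
      using psi_nth_flip_root_in_orbit[OF Node.prems(1) closed_left closed_right] Node.prems(3,4) by simp
  qed
qed simp

definition moves :: "bool \<Rightarrow> int tree \<Rightarrow> int tree \<Rightarrow> bool" where
  "moves z s s' \<longleftrightarrow> (\<exists>i < size s. (z \<longrightarrow> i \<noteq> 0) \<and> s' = psi_nth i s)"

lemma moves_Node_left:
  assumes "(moves z)\<^sup>*\<^sup>* l l'"
  shows "(moves z)\<^sup>*\<^sup>* (Node l a r) (Node l' a r)"
  using assms
proof (induction rule: rtranclp_induct)
  case (step u v)
  obtain i where "i < size u" "z \<longrightarrow> i \<noteq> 0" "v = psi_nth i u"
    using step.hyps(2) unfolding moves_def by blast
  then have "moves z (Node u a r) (Node v a r)"
    unfolding moves_def by (intro exI[of _ i]) simp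
  with step.IH show ?case by (rule rtranclp.rtrancl_into_rtrancl)
qed simp

lemma moves_Node_right:
  assumes "(moves False)\<^sup>*\<^sup>* r r'"
  shows "(moves z)\<^sup>*\<^sup>* (Node l a r) (Node l a r')"
  using assms
proof (induction rule: rtranclp_induct)
  case (step u v)
  obtain i where "i < size u" "v = psi_nth i u"
    using step.hyps(2) unfolding moves_def by blast
  then have "moves z (Node l a u) (Node l a v)"
    unfolding moves_def by (intro exI[of _ "size l + 1 + i"]) simp
  with step.IH show ?case by (rule rtranclp.rtrancl_into_rtrancl)
qed simp

lemma orbit_reachable:
  assumes "admissible z t" "s \<in> orbit z t"
  shows "(moves z)\<^sup>*\<^sup>* t s"
  using assms
proof (induction t arbitrary: s z)
  case Leaf
  then show ?case by simp
next
  case (Node l a r)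
  have unflipped: "(moves z)\<^sup>*\<^sup>* (Node l a r) (Node l' a r')"
    if "l' \<in> orbit z l" "r' \<in> orbit False r" for l' r'
    using moves_Node_left[OF Node.IH(1)[OF admissible_Node(1)[OF Node.prems(1)] that(1)]]
      moves_Node_right[OF Node.IH(2)[OF admissible_Node(2)[OF Node.prems(1)] that(2)]]
    by (rule rtranclp_trans)
  from Node.prems(2) show ?case
  proof (cases rule: orbit_NodeE)
    case (1 l' r')
    then show ?thesis using unflipped by simp
  next
    case (2 l' r')
    note parts = orbit_Node_parts[OF Node.prems(1) 2(1,2)]
    have "psi_nth (size l') (Node l' a r') = s"
      using relabel_node_active[OF parts(1)] parts(2) 2(3,4) by simp
    moreover have "z \<longrightarrow> size l' \<noteq> 0"
      using 2(4) parts(5) by (auto simp: active_def)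
    ultimately have "moves z (Node l' a r') s"
      unfolding moves_def by (intro exI[of _ "size l'"]) simp
    with unflipped[OF 2(1,2)] show ?thesis by (rule rtranclp.rtrancl_into_rtrancl)
  qed
qed

lemma Orb_eq_orbit:
  assumes "admissible True t" "size t = Suc n"
  shows "Orb n t = orbit True t"
proof
  have psi_orbit: "psi i s = psi_nth i s \<and> psi_nth i s \<in> orbit True t"
    if "s \<in> orbit True t" "i \<in> {1..n}" for s i
  proof -
    have "admissible True s" "size s = size t"
      using orbit_invariant[OF assms(1) that(1)] by (metis size_map_tree)+
    then show ?thesis
      using psi_eq_psi_nth[of s i] orbit_closed[OF assms(1) that(1)] that(2) assms(2)
      by (auto simp: admissible_def is_HR_def)
  qed
  show "Orb n t \<subseteq> orbit True t"
  proof
    fix s assume "s \<in> Orb n t"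
    then show "s \<in> orbit True t"
    proof (induction rule: Orb.induct)
      case refl
      show ?case by (rule self_in_orbit)
    next
      case (step s i)
      then show ?case using psi_orbit by simp
    qed
  qed
  show "orbit True t \<subseteq> Orb n t"
  proof
    fix s assume "s \<in> orbit True t"
    then have "(moves True)\<^sup>*\<^sup>* t s"
      by (rule orbit_reachable[OF assms(1)])
    then have "s \<in> Orb n t \<and> s \<in> orbit True t"
    proof (induction rule: rtranclp_induct)
      case base
      then show ?case using Orb.refl self_in_orbit by blast
    next
      case (step u v)
      obtain i where i: "i < size u" "i \<noteq> 0" "v = psi_nth i u"
        using step.hyps(2) unfolding moves_def by blast
      have "size u = size t"
        using orbit_invariant[OF assms(1)] step.IH by (metis size_map_tree)
      then have "i \<in> {1..n}" using i assms(2) by auto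
      then show ?case
        using psi_orbit[of u i] Orb.step[of u n t i] step.IH i(3) by auto
    qed
    then show "s \<in> Orb n t" ..
  qed
qed

section \<open>Generating functions of orbits\<close>

definition orbit_gf :: "bool \<Rightarrow> int tree \<Rightarrow> bool option \<Rightarrow> bool option \<Rightarrow> int poly" where
  "orbit_gf z t dp dq = (\<Sum>s\<in>orbit z t. monom 1 (turns dp s dq))"

lemma monom_one_add: "monom (1::int) (m + n) = monom 1 m * monom 1 n"
  by (simp add: mult_monom)

lemma orbit_gf_Leaf [simp]: "orbit_gf z Leaf dp dq = 1"
  by (simp add: orbit_gf_def)

lemma sum_orbit_Node_image:
  fixes f :: "int tree \<Rightarrow> int tree" and z :: bool and l r :: "int tree" and a :: int
  defines "U \<equiv> (\<lambda>(l', r'). Node l' a r') ` (orbit z l \<times> orbit False r)"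
  assumes "inj_on f U"
    and "\<And>l' r'. l' \<in> orbit z l \<Longrightarrow> r' \<in> orbit False r \<Longrightarrow>
      turns dp (f (Node l' a r')) dq = turns dp l' (Some \<sigma>) + c + turns (Some \<sigma>) r' dq"
  shows "(\<Sum>s\<in>f ` U. monom 1 (turns dp s dq)) =
    orbit_gf z l dp (Some \<sigma>) * monom 1 c * orbit_gf False r (Some \<sigma>) dq"
proof -
  have inj_Node: "inj_on (\<lambda>(l', r'). Node l' a r') (orbit z l \<times> orbit False r)"
    by (auto intro: inj_onI)
  have "(\<Sum>s\<in>f ` U. monom 1 (turns dp s dq)) = (\<Sum>s\<in>U. monom (1::int) (turns dp (f s) dq))"
    using sum.reindex[OF assms(2)] by simp
  also have "\<dots> = (\<Sum>(l', r')\<in>orbit z l \<times> orbit False r. monom 1 (turns dp (f (Node l' a r')) dq))"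
    unfolding U_def using sum.reindex[OF inj_Node] by (simp add: case_prod_beta comp_def)
  also have "\<dots> = (\<Sum>l'\<in>orbit z l. \<Sum>r'\<in>orbit False r.
      monom 1 (turns dp l' (Some \<sigma>)) * monom 1 c * monom 1 (turns (Some \<sigma>) r' dq))"
    unfolding sum.cartesian_product[symmetric]
    by (intro sum.cong HOL.refl) (simp only: assms(3) monom_one_add)
  also have "\<dots> = orbit_gf z l dp (Some \<sigma>) * monom 1 c * orbit_gf False r (Some \<sigma>) dq"
    by (simp add: orbit_gf_def sum_distrib_left sum_distrib_right) (rule sum.swap)
  finally show ?thesis .
qed

lemma orbit_gf_inactive:
  assumes "admissible z (Node l a r)" "\<not> active z l r"
  defines "\<tau> \<equiv> a = Max (set_tree (Node l a r))"
  shows "orbit_gf z (Node l a r) dp dq =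
    orbit_gf z l dp (Some \<tau>) * monom 1 (root_turn dp (l = Leaf) (r = Leaf) \<tau> dq) * orbit_gf False r (Some \<tau>) dq"
proof -
  let ?U = "(\<lambda>(l', r'). Node l' a r') ` (orbit z l \<times> orbit False r)"
  have orbit: "orbit z (Node l a r) = id ` ?U"
    using assms(2) by (simp add: Let_def)
  show ?thesis
    unfolding orbit_gf_def[of z "Node l a r"] orbit
  proof (rule sum_orbit_Node_image)
    fix l' r' assume "l' \<in> orbit z l" "r' \<in> orbit False r"
    from orbit_Node_parts[OF assms(1) this] show "turns dp (id (Node l' a r')) dq =
        turns dp l' (Some \<tau>) + root_turn dp (l = Leaf) (r = Leaf) \<tau> dq + turns (Some \<tau>) r' dq"
      using turns_Node[of l' a r' "set_tree (Node l a r)"] by (simp add: \<tau>_def)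
  qed simp
qed

lemma flip_root_unflipped_orbit:
  fixes z :: bool and l r :: "int tree" and a :: int
  defines "U \<equiv> (\<lambda>(l', r'). Node l' a r') ` (orbit z l \<times> orbit False r)"
  assumes "admissible z (Node l a r)" "active z l r"
  shows "inj_on flip_root U" "U \<inter> flip_root ` U = {}"
proof -
  have member: "\<exists>l' r'. hr_node l' r' a \<and> s = Node l' a r'" if "s \<in> U" for s
  proof -
    from that obtain p where "p \<in> orbit z l \<times> orbit False r" "s = (case p of (l', r') \<Rightarrow> Node l' a r')"
      unfolding U_def by blast
    then obtain l' r' where lr: "l' \<in> orbit z l" "r' \<in> orbit False r" and s: "s = Node l' a r'"
      by (cases p) auto
    have "admissible z (Node l' a r')" "active z l' r'"
      using orbit_Node_parts(1,2)[OF assms(2) lr] assms(3) by auto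
    then show ?thesis
      using active_hr_node s by blast
  qed
  have flip: "flip_root (flip_root s) = s \<and> flip_root s \<notin> U" if in_U: "s \<in> U" for s
  proof -
    obtain l' r' where node: "hr_node l' r' a" and s: "s = Node l' a r'"
      using member[OF in_U] by blast
    interpret hr_node l' r' a by (rule node)
    have "flip_root s \<notin> U"
    proof
      assume "flip_root s \<in> U"
      then obtain l'' r'' where "flip_root s = Node l'' a r''"
        using member by blast
      then show False
        using new_root_ne_root unfolding s flip_root_eq by simp
    qed
    then show ?thesis unfolding s using flip_root_involutive by simp
  qed
  then show "inj_on flip_root U"
    by (meson inj_on_inverseI)
  have "flip_root ` U \<subseteq> - U"
    using flip by (intro image_subsetI) simp
  then have "flip_root ` U \<inter> U = {}"
    by (simp only: disjoint_eq_subset_Compl)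
  then show "U \<inter> flip_root ` U = {}"
    by (simp only: Int_commute)
qed

lemma orbit_gf_active:
  assumes "admissible z (Node l a r)" "active z l r"
  defines "\<tau> \<equiv> a = Max (set_tree (Node l a r))"
  shows "orbit_gf z (Node l a r) dp dq =
    orbit_gf z l dp (Some True) * monom 1 (root_turn dp (l = Leaf) False True dq) * orbit_gf False r (Some True) dq
    + orbit_gf z l dp (Some False) * monom 1 (root_turn dp (l = Leaf) False False dq) * orbit_gf False r (Some False) dq"
proof -
  let ?U = "(\<lambda>(l', r'). Node l' a r') ` (orbit z l \<times> orbit False r)"
  let ?F = "\<lambda>\<sigma>. orbit_gf z l dp (Some \<sigma>) * monom 1 (root_turn dp (l = Leaf) False \<sigma> dq)
      * orbit_gf False r (Some \<sigma>) dq"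
  note flips = flip_root_unflipped_orbit[OF assms(1,2)]
  have right: "r \<noteq> Leaf"
    using hr_node.right_nonempty[OF active_hr_node[OF assms(1,2)]] .
  have parts: "hr_node l' r' a" "set_tree (Node l' a r') = set_tree (Node l a r)"
      "(l' = Leaf) = (l = Leaf)" "(r' = Leaf) = (r = Leaf)"
    if "l' \<in> orbit z l" "r' \<in> orbit False r" for l' r'
    using orbit_Node_parts[OF assms(1) that] active_hr_node assms(2) by auto
  have "(\<Sum>s\<in>id ` ?U. monom 1 (turns dp s dq)) = ?F \<tau>"
  proof (rule sum_orbit_Node_image)
    fix l' r' assume "l' \<in> orbit z l" "r' \<in> orbit False r"
    from parts[OF this] show "turns dp (id (Node l' a r')) dq =
        turns dp l' (Some \<tau>) + root_turn dp (l = Leaf) False \<tau> dq + turns (Some \<tau>) r' dq"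
      using turns_Node[of l' a r' "set_tree (Node l a r)"] right by (simp add: \<tau>_def)
  qed simp
  then have unflipped: "(\<Sum>s\<in>?U. monom 1 (turns dp s dq)) = ?F \<tau>"
    by simp
  have flipped: "(\<Sum>s\<in>flip_root ` ?U. monom 1 (turns dp s dq)) = ?F (\<not> \<tau>)"
  proof (rule sum_orbit_Node_image[OF flips(1)])
    fix l' r' assume "l' \<in> orbit z l" "r' \<in> orbit False r"
    from parts[OF this] show "turns dp (flip_root (Node l' a r')) dq =
        turns dp l' (Some (\<not> \<tau>)) + root_turn dp (l = Leaf) False (\<not> \<tau>) dq + turns (Some (\<not> \<tau>)) r' dq"
      using hr_node.turns_flip_root by (simp add: \<tau>_def hr_node.labels_def)
  qed
  have "finite ?U"
    using finite_orbit by blast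
  have "orbit z (Node l a r) = ?U \<union> flip_root ` ?U"
    using assms(2) by (simp add: Let_def)
  then have "orbit_gf z (Node l a r) dp dq =
      (\<Sum>s\<in>?U. monom 1 (turns dp s dq)) + (\<Sum>s\<in>flip_root ` ?U. monom 1 (turns dp s dq))"
    unfolding orbit_gf_def
    by (simp only: sum.union_disjoint[OF \<open>finite ?U\<close> finite_imageI[OF \<open>finite ?U\<close>] flips(2)])
  then have "orbit_gf z (Node l a r) dp dq = ?F \<tau> + ?F (\<not> \<tau>)"
    unfolding unflipped flipped .
  then show ?thesis
    by (cases \<tau>) (simp_all add: add.commute)
qed

lemma leaf_count_le_size: "leaf_count t \<le> size t"
  by (induction t) auto

lemma leaf_count_less_size:
  assumes "l \<noteq> Leaf \<or> r \<noteq> Leaf"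
  shows "leaf_count (Node l a r) < size (Node l a r)"
  using assms leaf_count_le_size[of l] leaf_count_le_size[of r] by auto

lemma monom_one_plus_one: "monom (1::int) 1 + 1 = [:1, 1:]"
  by (simp add: monom_Suc one_pCons)

lemma monom_power_mult:
  "[:1, 1:] * (monom (1::int) a * [:1, 1:] ^ b) * (monom 1 c * [:1, 1:] ^ d)
     = monom 1 (a + c) * [:1, 1:] ^ (b + d + 1)"
  by (simp add: monom_one_add power_add algebra_simps)

lemma root_turn_inner_right: "root_turn dp left_leaf False \<sigma> dq = root_turn dp left_leaf False \<sigma> None"
  by (simp add: root_turn_def)

text \<open>Only the last letter of the reading word sees the right neighbour. Since it is a leaf, it
  is a turn for exactly one of the two sides the neighbour can lie on.\<close>

lemma orbit_gf_Node_right_end_sum: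
  assumes "admissible z (Node l a r)" "r \<noteq> Leaf"
    and right: "\<And>\<sigma>. orbit_gf False r (Some \<sigma>) (Some True) + orbit_gf False r (Some \<sigma>) (Some False)
      = [:1, 1:] * orbit_gf False r (Some \<sigma>) None"
  shows "orbit_gf z (Node l a r) dp (Some True) + orbit_gf z (Node l a r) dp (Some False)
    = [:1, 1:] * orbit_gf z (Node l a r) dp None"
proof -
  let ?G = orbit_gf
  let ?m = "\<lambda>\<sigma>. monom (1::int) (root_turn dp (l = Leaf) False \<sigma> None)"
  note root = root_turn_inner_right[where dq = "Some True"] root_turn_inner_right[where dq = "Some False"]
  have inner: "(r = Leaf) = False" using assms(2) by simp
  show ?thesis
  proof (cases "active z l r")
    case True
    note split = orbit_gf_active[OF assms(1) True]
    have "?G z (Node l a r) dp (Some True) + ?G z (Node l a r) dp (Some False)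
      = ?G z l dp (Some True) * ?m True
          * (?G False r (Some True) (Some True) + ?G False r (Some True) (Some False))
        + ?G z l dp (Some False) * ?m False
          * (?G False r (Some False) (Some True) + ?G False r (Some False) (Some False))"
      unfolding split root by algebra
    also have "\<dots> = [:1, 1:] * ?G z (Node l a r) dp None"
      unfolding right unfolding split by algebra
    finally show ?thesis .
  next
    case False
    define \<tau> where "\<tau> = (a = Max (set_tree (Node l a r)))"
    note split = orbit_gf_inactive[OF assms(1) False, folded \<tau>_def]
    have "?G z (Node l a r) dp (Some True) + ?G z (Node l a r) dp (Some False)
      = ?G z l dp (Some \<tau>) * ?m \<tau> * (?G False r (Some \<tau>) (Some True) + ?G False r (Some \<tau>) (Some False))"
      unfolding split inner root by algebra
    also have "\<dots> = [:1, 1:] * ?G z (Node l a r) dp None"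
      unfolding right unfolding split inner by algebra
    finally show ?thesis .
  qed
qed

lemma orbit_gf_right_end_sum:
  assumes "admissible False t" "t \<noteq> Leaf"
  shows "orbit_gf False t (Some d) (Some True) + orbit_gf False t (Some d) (Some False)
    = [:1, 1:] * orbit_gf False t (Some d) None"
  using assms
proof (induction t arbitrary: d)
  case (Node l a r)
  show ?case
  proof (cases "r = Leaf")
    case True
    then have "l = Leaf"
      using Node.prems(1) hr_cond_NodeD(4)[OF _ HOL.refl] by (auto simp: admissible_def is_HR_def)
    then have "orbit_gf False (Node l a r) (Some d) q = monom 1 (of_bool (Some d = q))" for q
      using orbit_gf_inactive[OF Node.prems(1)] True by (simp add: active_def root_turn_def)
    then show ?thesis
      using monom_one_plus_one by (cases d) (simp_all add: add.commute)
  next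
    case False
    show ?thesis
      using orbit_gf_Node_right_end_sum[OF Node.prems(1) False]
        Node.IH(2)[OF admissible_Node(2)[OF Node.prems(1)] False] by blast
  qed
qed simp

lemma orbit_gf_zero_right_end_sum:
  assumes "admissible True t" "2 \<le> size t"
  shows "orbit_gf True t None (Some True) + orbit_gf True t None (Some False)
    = [:1, 1:] * orbit_gf True t None None"
proof (cases t)
  case (Node l a r)
  have "r \<noteq> Leaf"
    using assms Node hr_cond_NodeD(4)[OF _ HOL.refl, of l a r]
    by (cases l) (auto simp: admissible_def is_HR_def)
  then show ?thesis
    using orbit_gf_Node_right_end_sum[OF assms(1)[unfolded Node]] orbit_gf_right_end_sum
      admissible_Node(2)[OF assms(1)[unfolded Node]] Node by blast
qed (use assms in simp)

lemma orbit_gf_Node_no_right_end: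
  assumes "admissible z (Node l a r)" "active z l r" "l \<noteq> Leaf"
    and right: "\<And>\<sigma>. monom 1 1 * orbit_gf False r (Some \<sigma>) None = K"
    and left: "orbit_gf z l dp (Some True) + orbit_gf z l dp (Some False)
      = [:1, 1:] * orbit_gf z l dp None"
  shows "monom 1 1 * orbit_gf z (Node l a r) dp None = [:1, 1:] * (monom 1 1 * orbit_gf z l dp None) * K"
proof -
  let ?G = orbit_gf
  have inner: "(l = Leaf) = False" "root_turn dp False False \<sigma> None = 1" for \<sigma>
    using assms(3) by (simp_all add: root_turn_def)
  have "monom 1 1 * ?G z (Node l a r) dp None
    = monom 1 1 * (?G z l dp (Some True) * (monom 1 1 * ?G False r (Some True) None)
        + ?G z l dp (Some False) * (monom 1 1 * ?G False r (Some False) None))"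
    unfolding orbit_gf_active[OF assms(1,2)] inner by algebra
  also have "\<dots> = monom 1 1 * (?G z l dp (Some True) + ?G z l dp (Some False)) * K"
    unfolding right by algebra
  also have "\<dots> = [:1, 1:] * (monom 1 1 * ?G z l dp None) * K"
    unfolding left by algebra
  finally show ?thesis .
qed

lemma orbit_gf_no_right_end:
  assumes "admissible False t" "t \<noteq> Leaf"
  shows "monom 1 1 * orbit_gf False t (Some d) None
    = monom 1 (leaf_count t) * [:1, 1:] ^ (size t - leaf_count t)"
  using assms
proof (induction t arbitrary: d)
  case (Node l a r)
  have hr: "hr_cond (Node l a r)"
    using Node.prems(1) by (simp add: admissible_def is_HR_def)
  show ?case
  proof (cases "r = Leaf")
    case True
    then have "l = Leaf" using hr_cond_NodeD(4)[OF hr HOL.refl] by blast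
    then show ?thesis
      using orbit_gf_inactive[OF Node.prems(1)] True by (simp add: active_def root_turn_def)
  next
    case False
    have active: "active False l r"
      using False Node.prems(1) by (auto simp: active_def admissible_def)
    define K where "K = monom (1::int) (leaf_count r) * [:1, 1:] ^ (size r - leaf_count r)"
    have right: "monom 1 1 * orbit_gf False r (Some \<sigma>) None = K" for \<sigma>
      unfolding K_def using Node.IH(2)[OF admissible_Node(2)[OF Node.prems(1)] False] .
    have "leaf_count r \<le> size r" "leaf_count l \<le> size l"
      by (rule leaf_count_le_size)+
    show ?thesis
    proof (cases "l = Leaf")
      case True
      have "monom 1 1 * orbit_gf False (Node l a r) (Some d) None
        = monom 1 (of_bool (d = False)) * (monom 1 1 * orbit_gf False r (Some True) None)
          + monom 1 (of_bool (d = True)) * (monom 1 1 * orbit_gf False r (Some False) None)"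
        unfolding orbit_gf_active[OF Node.prems(1) active] using True
        by (simp add: root_turn_def algebra_simps)
      also have "\<dots> = (monom 1 (of_bool (d = False)) + monom 1 (of_bool (d = True))) * K"
        unfolding right by (simp only: distrib_right)
      also have "monom (1::int) (of_bool (d = False)) + monom 1 (of_bool (d = True)) = [:1, 1:]"
        using monom_one_plus_one by (cases d) (simp_all add: add.commute)
      finally show ?thesis
        using True False \<open>leaf_count r \<le> size r\<close> by (simp add: K_def Suc_diff_le algebra_simps)
    next
      case l: False
      note left = orbit_gf_right_end_sum[OF admissible_Node(1)[OF Node.prems(1)] l]
      have "monom 1 1 * orbit_gf False (Node l a r) (Some d) None
        = monom 1 (leaf_count l + leaf_count r)
          * [:1, 1:] ^ ((size l - leaf_count l) + (size r - leaf_count r) + 1)"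
        unfolding orbit_gf_Node_no_right_end[OF Node.prems(1) active l right left] K_def
          Node.IH(1)[OF admissible_Node(1)[OF Node.prems(1)] l] by (rule monom_power_mult)
      moreover have "leaf_count (Node l a r) = leaf_count l + leaf_count r"
        "size (Node l a r) - leaf_count (Node l a r) = (size l - leaf_count l) + (size r - leaf_count r) + 1"
        using l False \<open>leaf_count r \<le> size r\<close> \<open>leaf_count l \<le> size l\<close> by auto
      ultimately show ?thesis by (simp only:)
    qed
  qed
qed simp

lemma orbit_gf_zero:
  assumes "admissible True t" "t \<noteq> Leaf"
  shows "monom 1 1 * orbit_gf True t None None
    = monom 1 (leaf_count t) * [:1, 1:] ^ (size t - 1 - leaf_count t)"
  using assms
proof (induction t)
  case (Node l a r)
  have hr: "hr_cond (Node l a r)"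
    using Node.prems(1) by (simp add: admissible_def is_HR_def)
  show ?case
  proof (cases "r = Leaf")
    case True
    then have "l = Leaf" using hr_cond_NodeD(4)[OF hr HOL.refl] by blast
    then show ?thesis
      using orbit_gf_inactive[OF Node.prems(1)] True by (simp add: active_def root_turn_def)
  next
    case False
    define K where "K = monom (1::int) (leaf_count r) * [:1, 1:] ^ (size r - leaf_count r)"
    have right: "monom 1 1 * orbit_gf False r (Some \<sigma>) None = K" for \<sigma>
      unfolding K_def using orbit_gf_no_right_end[OF admissible_Node(2)[OF Node.prems(1)] False] .
    have "leaf_count r \<le> size r"
      by (rule leaf_count_le_size)
    consider "l = Leaf" | "l = Node Leaf 0 Leaf" | "active True l r"
      using False by (auto simp: active_def)
    then show ?thesis
    proof cases
      case 1
      then have "monom 1 1 * orbit_gf True (Node l a r) None None = K"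
        using orbit_gf_inactive[OF Node.prems(1)] False right by (simp add: active_def root_turn_def)
      then show ?thesis
        using 1 False by (simp add: K_def)
    next
      case 2
      have "orbit True l = {l}"
        using 2 by (simp add: active_def)
      then have "orbit_gf True l None q = 1" for q
        using 2 by (simp add: orbit_gf_def turns_Node root_turn_def)
      then have "monom 1 1 * orbit_gf True (Node l a r) None None = monom 1 1 * K"
        using orbit_gf_inactive[OF Node.prems(1)] 2 False right by (simp add: active_def root_turn_def)
      then show ?thesis
        using 2 False \<open>leaf_count r \<le> size r\<close> by (simp add: K_def mult_monom algebra_simps)
    next
      case 3
      have l: "l \<noteq> Leaf" "l \<noteq> Node Leaf 0 Leaf"
        using 3 by (auto simp: active_def)
      have adm_l: "admissible True l"
        using admissible_Node(1)[OF Node.prems(1)] .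
      obtain l1 x r1 where l_Node: "l = Node l1 x r1"
        using l(1) by (cases l) auto
      have "l1 \<noteq> Leaf \<or> r1 \<noteq> Leaf"
      proof (rule ccontr)
        assume "\<not> (l1 \<noteq> Leaf \<or> r1 \<noteq> Leaf)"
        then have "l = Node Leaf x Leaf" using l_Node by simp
        then show False using adm_l l(2) by (simp add: admissible_def)
      qed
      then have "2 \<le> size l" "leaf_count l < size l"
        using leaf_count_less_size[of l1 r1 x] l_Node by (auto simp: Suc_le_eq zero_less_iff_neq_zero)
      note left = orbit_gf_zero_right_end_sum[OF adm_l \<open>2 \<le> size l\<close>]
      have "monom 1 1 * orbit_gf True (Node l a r) None None
        = monom 1 (leaf_count l + leaf_count r)
          * [:1, 1:] ^ ((size l - 1 - leaf_count l) + (size r - leaf_count r) + 1)"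
        unfolding orbit_gf_Node_no_right_end[OF Node.prems(1) 3 l(1) right left] K_def
          Node.IH(1)[OF adm_l l(1)] by (rule monom_power_mult)
      moreover have "leaf_count (Node l a r) = leaf_count l + leaf_count r"
        "size (Node l a r) - 1 - leaf_count (Node l a r)
          = (size l - 1 - leaf_count l) + (size r - leaf_count r) + 1"
        using l False \<open>leaf_count r \<le> size r\<close> \<open>leaf_count l < size l\<close> by auto
      ultimately show ?thesis by (simp only:)
    qed
  qed
qed simp

lemma runB_tl_inorder:
  assumes "admissible True s" "s \<noteq> Leaf"
  shows "runB (tl (inorder s)) = 1 + turns None s None"
proof -
  have "inorder s \<noteq> []" using assms(2) by (cases s) auto
  moreover have "hd (inorder s) = 0" using assms by (simp add: admissible_def)
  ultimately have word: "0 # tl (inorder s) = inorder s"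
    by (metis list.collapse)
  have "runB (tl (inorder s)) = 1 + list_turns None (0 # tl (inorder s)) None"
    by (rule runB_eq_list_turns)
  also have "list_turns None (0 # tl (inorder s)) None = turns None s None"
    unfolding word using list_turns_inorder[of s None None] assms(1)
    by (simp add: admissible_def is_HR_def separated_def neighbour_above_def)
  finally show ?thesis .
qed

lemma distinct_zero_signed_perm:
  assumes "p \<in> signed_perms n"
  shows "distinct (0 # p)"
proof -
  have abs: "distinct (map (\<lambda>x. nat \<bar>x\<bar>) p)" "set (map (\<lambda>x. nat \<bar>x\<bar>) p) = {1..n}"
    using assms by (auto simp: signed_perms_def)
  have "0 \<notin> set p"
  proof
    assume "0 \<in> set p"
    then have "nat \<bar>0\<bar> \<in> (\<lambda>x. nat \<bar>x\<bar>) ` set p"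
      by (rule imageI)
    then show False using abs(2) by simp
  qed
  then show ?thesis using abs(1) by (simp add: distinct_map)
qed

theorem mainTheorem11:
  fixes n :: nat and p :: "int list"
  assumes "n \<ge> 1" and "p \<in> signed_perms n"
  shows "(\<Sum>s\<in>Orb n (T_of p). monom (1::int) (runB (tl (inorder s))))
           = monom 1 (leaf_count (T_of p)) * [:1, 1:] ^ (n - leaf_count (T_of p))"
proof -
  let ?T = "T_of p"
  have distinct: "distinct (0 # p)"
    using distinct_zero_signed_perm[OF assms(2)] .
  have admissible: "admissible True ?T"
    using is_HR_T_of[OF distinct] inorder_T_of[OF distinct] by (simp add: admissible_def)
  have size: "size ?T = Suc n"
    using inorder_T_of[OF distinct] length_inorder[of ?T] assms(2) by (simp add: signed_perms_def)
  have "runB (tl (inorder s)) = 1 + turns None s None" if "s \<in> orbit True ?T" for s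
  proof -
    have "admissible True s" "shape s = shape ?T"
      using orbit_invariant[OF admissible that] by auto
    then show ?thesis
      using size runB_tl_inorder shape_eq_Leaf_iff by fastforce
  qed
  then have "(\<Sum>s\<in>Orb n ?T. monom (1::int) (runB (tl (inorder s))))
      = monom 1 1 * orbit_gf True ?T None None"
    unfolding Orb_eq_orbit[OF admissible size] orbit_gf_def sum_distrib_left
    by (simp add: mult_monom)
  also have "\<dots> = monom 1 (leaf_count ?T) * [:1, 1:] ^ (n - leaf_count ?T)"
    using orbit_gf_zero[OF admissible] size by (metis diff_Suc_1 nat.distinct(1) eq_size_0)
  finally show ?thesis .
qed

end
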